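(* Consider the interconnected system described in the context, with a partition $\{1,\dots,n\}=I_\Sigma\cup I_{\max}$, and assume each subsystem is globally stable (GS) in the mixed sense with gains $\hat\gamma_{ij}$, i.e. there are $\sigma_i,\hat\gamma_{ij},\hat\gamma_i\in\mathcal{K}\cup\{0\}$ such that for every initial value and all inputs the solution $x_i$ of the $i$-th subsystem exists, is unique, and for all $t\ge0$ $|x_i(t)|\le\sigma_i(|x_i(0)|)+\sum_{j=1}^n\hat\gamma_{ij}(\|x_{j[0,t]}\|_\infty)+\hat\gamma_i(\|u\|_\infty)$ if $i\in I_\Sigma$, and $|x_i(t)|\le\max\{\sigma_i(|x_i(0)|),\max_j\hat\gamma_{ij}(\|x_{j[0,t]}\|_\infty),\hat\gamma_i(\|u\|_\infty)\}$ if $i\in I_{\max}$. Let $\Gamma$ be the gain operator built from $(\hat\gamma_{ij})$ (with $\hat\gamma_{ii}\equiv0$). If there exists $\alpha\in\mathcal{K}_\infty$ such that $\Gamma\circ D_\alpha(s)\not\ge s$ for all $s\in\mathbb{R}^n_+\setminus\{0\}$, then the whole system $\dot x=f(x,u)$ is GS, i.e. there exist $\sigma,\hat\gamma\in\mathcal{K}$ with $|x(t)|\le\sigma(|x(0)|)+\hat\gamma(\|u\|_\infty)$ for all $x(0)$, all $u\in L_\infty$, all $t\ge0$.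
   Context: The interconnection is $\dot x_i=f_i(x_1,\dots,x_n,u_i)$, $i=1,\dots,n$, with $x_i\in\mathbb{R}^{N_i}$, $u_i\in\mathbb{R}^{m_i}$, where each $f_i$ is continuous and, for every $r$, locally Lipschitz in $x=(x_1^T,\dots,x_n^T)^T$ uniformly in $u_i$ with $|u_i|\le r$; it is written as $\dot x=f(x,u)$ with $u=(u_1^T,\dots,u_n^T)^T$. For the $i$-th subsystem the states $x_j$, $j\neq i$, are treated as independent inputs. For a function $v$ on $\mathbb{R}_+$, $v_{[s_1,s_2]}$ equals $v$ on $[s_1,s_2]$ and $0$ elsewhere; $\|\cdot\|_\infty$ is the essential supremum norm; $|\cdot|$ a norm. $\mathcal{K}$: continuous strictly increasing functions $\mathbb{R}_+\to\mathbb{R}_+$ vanishing at $0$; $\mathcal{K}_\infty$: unbounded ones. For $x,y\in\mathbb{R}^n$, $x\not\ge y$ means $x_i<y_i$ for some $i$. The gain operator is $\Gamma(s)=(\Gamma_1(s),\dots,\Gamma_n(s))^T$ with $\Gamma_i(s)=\sum_j\hat\gamma_{ij}(s_j)$ for $i\in I_\Sigma$ and $\Gamma_i(s)=\max_j\hat\gamma_{ij}(s_j)$ for $i\in I_{\max}$; $D_\alpha(s)=(D_1(s_1),\dots,D_n(s_n))^T$ with $D_i=\mathrm{id}+\alpha$ for $i\in I_\Sigma$ and $D_i=\mathrm{id}$ for $i\in I_{\max}$. *)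

theory Defs
  imports "HOL-Analysis.Analysis"
begin

definition class_K :: "(real \<Rightarrow> real) \<Rightarrow> bool" where
  "class_K g \<longleftrightarrow> continuous_on {0..} g \<and> strict_mono_on {0..} g \<and> g 0 = 0"

definition class_Kinf :: "(real \<Rightarrow> real) \<Rightarrow> bool" where
  "class_Kinf g \<longleftrightarrow> class_K g \<and> filterlim g at_top at_top"

definition class_K0 :: "(real \<Rightarrow> real) \<Rightarrow> bool" where
  "class_K0 g \<longleftrightarrow> class_K g \<or> (\<forall>s\<ge>0. g s = 0)"

definition blk :: "('k \<Rightarrow> 'i) \<Rightarrow> 'i \<Rightarrow> real^'k \<Rightarrow> real^'k" where
  "blk b i v = (\<chi> k. if b k = i then v $ k else 0)"

definition Linf :: "(real \<Rightarrow> 'a::euclidean_space) \<Rightarrow> bool" where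
  "Linf u \<longleftrightarrow> (\<lambda>t. indicator {0..} t *\<^sub>R u t) \<in> borel_measurable lborel
      \<and> (\<exists>B. AE t in lborel. 0 \<le> t \<longrightarrow> norm (u t) \<le> B)"

definition linf_norm :: "(real \<Rightarrow> 'a::real_normed_vector) \<Rightarrow> real" where
  "linf_norm u = Inf {B. 0 \<le> B \<and> (AE t in lborel. 0 \<le> t \<longrightarrow> norm (u t) \<le> B)}"

definition trunc :: "real \<Rightarrow> real \<Rightarrow> (real \<Rightarrow> 'a::zero) \<Rightarrow> real \<Rightarrow> 'a" where
  "trunc a b v = (\<lambda>s. if a \<le> s \<and> s \<le> b then v s else 0)"

text \<open>(Caratheodory) solution on [0,\<infinity>) of x' = F t x, x(0) = xi, in integral form.\<close>
definition is_solution :: "(real \<Rightarrow> 'a::euclidean_space \<Rightarrow> 'a) \<Rightarrow> 'a \<Rightarrow> (real \<Rightarrow> 'a) \<Rightarrow> bool" where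
  "is_solution F xi x \<longleftrightarrow> x 0 = xi \<and> continuous_on {0..} x
     \<and> (\<forall>t\<ge>0. ((\<lambda>s. F s (x s)) has_integral (x t - xi)) {0..t})"

text \<open>Right-hand side of the i-th subsystem: state y (block i), the other blocks x_j
  taken from the independent input w, input u.\<close>
definition sub_rhs :: "('d \<Rightarrow> 'i) \<Rightarrow> (real^'d \<Rightarrow> real^'m \<Rightarrow> real^'d) \<Rightarrow> 'i
     \<Rightarrow> (real \<Rightarrow> real^'d) \<Rightarrow> (real \<Rightarrow> real^'m) \<Rightarrow> real \<Rightarrow> real^'d \<Rightarrow> real^'d" where
  "sub_rhs b f i w u = (\<lambda>s y. blk b i (f (y + (w s - blk b i (w s))) (u s)))"

definition gain_op :: "'i set \<Rightarrow> ('i \<Rightarrow> 'i \<Rightarrow> real \<Rightarrow> real) \<Rightarrow> real^'i \<Rightarrow> real^'i" where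
  "gain_op IS g s = (\<chi> i. if i \<in> IS then (\<Sum>j\<in>UNIV. g i j (s $ j))
                                      else Max (range (\<lambda>j. g i j (s $ j))))"

definition D_op :: "'i set \<Rightarrow> (real \<Rightarrow> real) \<Rightarrow> real^'i \<Rightarrow> real^'i" where
  "D_op IS \<alpha> s = (\<chi> i. if i \<in> IS then s $ i + \<alpha> (s $ i) else s $ i)"

end

theory Submission
  imports Defs
begin

text \<open>
  Along a solution on \<open>[0,T]\<close> let \<open>s\<^sub>j\<close> be the maximum of \<open>|x\<^sub>j|\<close> over \<open>[0,t]\<close>. The GS
  estimates of the subsystems, applied with the other blocks as inputs, give the mixed inequality
  \<open>s \<le> w \<oplus> \<Gamma>(s)\<close>, where \<open>w\<close> collects the contributions of the initial value and of the input.
  The small-gain condition, applied to \<open>D\<^sub>\<alpha>\<^sup>-\<^sup>1(s)\<close>, yields a nonzero coordinate with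
  \<open>s\<^sub>i \<le> w\<^sub>i + \<alpha>\<^sup>-\<^sup>1(w\<^sub>i)\<close>; freezing the coordinates bounded so far and repeating \<open>n\<close> times
  bounds all of \<open>s\<close> by a gain of the data, uniformly in \<open>T\<close>. This a priori bound rules out
  blow-up, so the local (Carath\'eodory--Picard) solutions continue to a unique global solution,
  which obeys the bound.
\<close>

section \<open>Comparison functions\<close>

text \<open>Class \<open>\<K> \<union> {0}\<close> relaxed to nondecreasing functions; unlike \<open>\<K>\<close> it is closed under the
  sums, scalings and compositions that build the gain of the interconnection.\<close>
definition mono_gain :: "(real \<Rightarrow> real) \<Rightarrow> bool" where
  "mono_gain \<phi> \<longleftrightarrow> continuous_on {0..} \<phi> \<and> mono_on {0..} \<phi> \<and> \<phi> 0 = 0"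

lemma mono_gainD:
  assumes "mono_gain \<phi>"
  shows mono_gain_continuous: "continuous_on {0..} \<phi>"
    and mono_gain_zero: "\<phi> 0 = 0"
    and mono_gain_mono: "\<And>a b. 0 \<le> a \<Longrightarrow> a \<le> b \<Longrightarrow> \<phi> a \<le> \<phi> b"
    and mono_gain_nonneg: "\<And>a. 0 \<le> a \<Longrightarrow> 0 \<le> \<phi> a"
proof -
  show c: "continuous_on {0..} \<phi>" and z: "\<phi> 0 = 0" using assms by (auto simp: mono_gain_def)
  show m: "\<phi> a \<le> \<phi> b" if "0 \<le> a" "a \<le> b" for a b
    using assms that unfolding mono_gain_def by (auto intro: mono_onD)
  show "0 \<le> \<phi> a" if "0 \<le> a" for a using m[OF order_refl that] z by simp
qed

lemma mono_gainI:
  assumes "continuous_on {0..} \<phi>" "\<And>a b. 0 \<le> a \<Longrightarrow> a \<le> b \<Longrightarrow> \<phi> a \<le> \<phi> b" "\<phi> 0 = 0"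
  shows "mono_gain \<phi>"
  using assms unfolding mono_gain_def by (auto intro: mono_onI)

lemma mono_gain_add:
  "mono_gain \<phi> \<Longrightarrow> mono_gain \<psi> \<Longrightarrow> mono_gain (\<lambda>s. \<phi> s + \<psi> s)"
  by (rule mono_gainI) (auto intro: continuous_intros add_mono
      simp: mono_gain_continuous mono_gain_mono mono_gain_zero)

lemma mono_gain_sum:
  "(\<And>k. k \<in> A \<Longrightarrow> mono_gain (\<phi> k)) \<Longrightarrow> mono_gain (\<lambda>s. \<Sum>k\<in>A. \<phi> k s)"
  by (rule mono_gainI) (auto intro!: continuous_on_sum sum_mono
      simp: mono_gain_continuous mono_gain_mono mono_gain_zero)

lemma mono_gain_cmult:
  "mono_gain \<phi> \<Longrightarrow> 0 \<le> c \<Longrightarrow> mono_gain (\<lambda>s. c * \<phi> s)"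
  by (rule mono_gainI) (auto intro: continuous_intros mult_left_mono
      simp: mono_gain_continuous mono_gain_mono mono_gain_zero)

lemma mono_gain_compose:
  assumes \<phi>: "mono_gain \<phi>" and \<psi>: "mono_gain \<psi>"
  shows "mono_gain (\<lambda>s. \<phi> (\<psi> s))"
proof (rule mono_gainI)
  show "continuous_on {0..} (\<lambda>s. \<phi> (\<psi> s))"
    by (rule continuous_on_compose2[OF mono_gain_continuous[OF \<phi>] mono_gain_continuous[OF \<psi>]])
       (auto intro: mono_gain_nonneg[OF \<psi>])
qed (auto intro!: mono_gain_mono[OF \<phi>] mono_gain_mono[OF \<psi>] mono_gain_nonneg[OF \<psi>]
      simp: mono_gain_zero[OF \<phi>] mono_gain_zero[OF \<psi>])

lemma mono_gain_ident: "mono_gain (\<lambda>s. s)"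
  by (rule mono_gainI) (auto intro: continuous_intros)

lemma class_K_imp_mono_gain:
  assumes "class_K \<phi>" shows "mono_gain \<phi>"
proof (rule mono_gainI)
  show "\<phi> a \<le> \<phi> b" if "0 \<le> a" "a \<le> b" for a b
    using assms that unfolding class_K_def strict_mono_on_def
    by (cases "a = b") (auto simp: less_eq_real_def)
qed (use assms in \<open>auto simp: class_K_def\<close>)

lemma class_K0_imp_mono_gain:
  assumes "class_K0 \<phi>" shows "mono_gain \<phi>"
proof (cases "class_K \<phi>")
  case False
  then have "\<forall>s\<ge>0. \<phi> s = 0" using assms by (simp add: class_K0_def)
  then show ?thesis
    by (intro mono_gainI) (auto intro: continuous_on_cong[THEN iffD2, OF refl _ continuous_on_const])
qed (rule class_K_imp_mono_gain)

lemma mono_gain_add_ident_class_K: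
  assumes "mono_gain \<phi>" shows "class_K (\<lambda>s. s + \<phi> s)"
  unfolding class_K_def
proof (intro conjI strict_mono_onI)
  show "continuous_on {0..} (\<lambda>s. s + \<phi> s)"
    by (intro continuous_intros mono_gain_continuous[OF assms])
  show "a + \<phi> a < b + \<phi> b" if "a \<in> {0..}" "b \<in> {0..}" "a < b" for a b
    using mono_gain_mono[OF assms, of a b] that by simp
qed (simp add: mono_gain_zero[OF assms])

lemma mono_gain_add_le:
  assumes "mono_gain \<phi>" "0 \<le> a" "0 \<le> b"
  shows "\<phi> (a + b) \<le> \<phi> (2 * a) + \<phi> (2 * b)"
  using mono_gain_mono[OF assms(1), of "a + b" "2 * a"] mono_gain_mono[OF assms(1), of "a + b" "2 * b"]
    mono_gain_nonneg[OF assms(1), of "2 * a"] mono_gain_nonneg[OF assms(1), of "2 * b"] assms(2,3)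
  by (cases "a \<le> b") auto

lemma class_K_gain_split:
  fixes \<sigma> \<gamma> :: "'i::finite \<Rightarrow> real \<Rightarrow> real"
  assumes \<Phi>: "mono_gain \<Phi>" and "\<And>k. mono_gain (\<sigma> k)" "\<And>k. mono_gain (\<gamma> k)"
  obtains \<sigma>0 \<gamma>0 where "class_K \<sigma>0" "class_K \<gamma>0"
    "\<And>a c. 0 \<le> a \<Longrightarrow> 0 \<le> c \<Longrightarrow> \<Phi> ((\<Sum>k\<in>UNIV. \<sigma> k a) + (\<Sum>k\<in>UNIV. \<gamma> k c)) \<le> \<sigma>0 a + \<gamma>0 c"
proof
  have "mono_gain (\<lambda>s. 2 * (\<Sum>k\<in>UNIV. \<sigma> k s))" "mono_gain (\<lambda>s. 2 * (\<Sum>k\<in>UNIV. \<gamma> k s))"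
    by (simp_all add: mono_gain_cmult mono_gain_sum assms(2,3))
  then show "class_K (\<lambda>s. s + \<Phi> (2 * (\<Sum>k\<in>UNIV. \<sigma> k s)))" "class_K (\<lambda>s. s + \<Phi> (2 * (\<Sum>k\<in>UNIV. \<gamma> k s)))"
    by (simp_all add: mono_gain_add_ident_class_K mono_gain_compose[OF \<Phi>])
  fix a c :: real assume "0 \<le> a" "0 \<le> c"
  then have "0 \<le> (\<Sum>k\<in>UNIV. \<sigma> k a)" "0 \<le> (\<Sum>k\<in>UNIV. \<gamma> k c)"
    using mono_gain_nonneg[OF assms(2)] mono_gain_nonneg[OF assms(3)] by (auto intro: sum_nonneg)
  then show "\<Phi> ((\<Sum>k\<in>UNIV. \<sigma> k a) + (\<Sum>k\<in>UNIV. \<gamma> k c))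
      \<le> (a + \<Phi> (2 * (\<Sum>k\<in>UNIV. \<sigma> k a))) + (c + \<Phi> (2 * (\<Sum>k\<in>UNIV. \<gamma> k c)))"
    using mono_gain_add_le[OF \<Phi>] \<open>0 \<le> a\<close> \<open>0 \<le> c\<close> by fastforce
qed

lemma class_Kinf_strict_mono:
  "class_Kinf h \<Longrightarrow> 0 \<le> a \<Longrightarrow> a < b \<Longrightarrow> h a < h b"
  unfolding class_Kinf_def class_K_def strict_mono_on_def by auto

lemma class_Kinf_imp_mono_gain: "class_Kinf h \<Longrightarrow> mono_gain h"
  by (simp add: class_Kinf_def class_K_imp_mono_gain)

text \<open>The inverse of a \<open>\<K>\<^sub>\<infinity>\<close> function on \<open>[0,\<infinity>)\<close>; unspecified at negative arguments.\<close>
definition Kinf_inv :: "(real \<Rightarrow> real) \<Rightarrow> real \<Rightarrow> real" where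
  "Kinf_inv h y = (SOME x. 0 \<le> x \<and> h x = y)"

lemma Kinf_inv:
  assumes h: "class_Kinf h" and y: "0 \<le> y"
  shows Kinf_inv_nonneg: "0 \<le> Kinf_inv h y" and Kinf_inv_inverse: "h (Kinf_inv h y) = y"
proof -
  have "eventually (\<lambda>x. y \<le> h x) at_top"
    using h unfolding class_Kinf_def filterlim_at_top by auto
  then obtain c where c: "\<And>x. x \<ge> c \<Longrightarrow> y \<le> h x" by (auto simp: eventually_at_top_linorder)
  have "continuous_on {0..max c 0} h" using h unfolding class_Kinf_def class_K_def
    by (auto intro: continuous_on_subset)
  moreover have "h 0 \<le> y" using h y by (simp add: class_Kinf_def class_K_def)
  moreover have "y \<le> h (max c 0)" using c by simp
  ultimately obtain x where "0 \<le> x" "h x = y"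
    using IVT'[of h 0 y "max c 0"] by auto
  then have "\<exists>x. 0 \<le> x \<and> h x = y" by blast
  then have "0 \<le> Kinf_inv h y \<and> h (Kinf_inv h y) = y"
    unfolding Kinf_inv_def by (rule someI_ex)
  then show "0 \<le> Kinf_inv h y" "h (Kinf_inv h y) = y" by auto
qed

lemma Kinf_inv_le_iff:
  assumes h: "class_Kinf h" and "0 \<le> x" "0 \<le> y"
  shows "Kinf_inv h y \<le> x \<longleftrightarrow> y \<le> h x"
proof
  assume "Kinf_inv h y \<le> x"
  then show "y \<le> h x"
    using mono_gain_mono[OF class_Kinf_imp_mono_gain[OF h] Kinf_inv_nonneg[OF h assms(3)]]
      Kinf_inv_inverse[OF h assms(3)] by metis
next
  assume "y \<le> h x"
  show "Kinf_inv h y \<le> x"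
  proof (rule ccontr)
    assume "\<not> Kinf_inv h y \<le> x"
    then have "h x < y"
      using class_Kinf_strict_mono[OF h assms(2), of "Kinf_inv h y"] Kinf_inv_inverse[OF h assms(3)]
      by simp
    then show False using \<open>y \<le> h x\<close> by simp
  qed
qed

lemma continuous_on_Kinf_inv:
  assumes h: "class_Kinf h" shows "continuous_on {0..} (Kinf_inv h)"
  unfolding continuous_on_iff
proof (intro ballI allI impI)
  fix y0 e :: real assume y0: "y0 \<in> {0..}" and e: "0 < e"
  define x0 where "x0 = Kinf_inv h y0"
  have x0: "0 \<le> x0" "h x0 = y0" using Kinf_inv[OF h] y0 by (auto simp: x0_def)
  \<comment> \<open>\<open>h\<close> maps \<open>(x0 - e, x0 + e) \<inter> [0,\<infinity>)\<close> onto \<open>(lo, hi) \<inter> [0,\<infinity>)\<close>\<close>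
  define hi where "hi = h (x0 + e)"
  define lo where "lo = (if 0 \<le> x0 - e then h (x0 - e) else -1)"
  have hi: "y0 < hi" using class_Kinf_strict_mono[OF h x0(1), of "x0 + e"] e x0 by (simp add: hi_def)
  have lo: "lo < y0" using class_Kinf_strict_mono[OF h, of "x0 - e" x0] e x0 y0 by (auto simp: lo_def)
  have "dist (Kinf_inv h y) (Kinf_inv h y0) < e"
    if y: "y \<in> {0..}" "dist y y0 < min (hi - y0) (y0 - lo)" for y
  proof -
    have yb: "lo < y" "y < hi" using y by (auto simp: dist_real_def)
    have ky: "0 \<le> Kinf_inv h y" "h (Kinf_inv h y) = y" using Kinf_inv[OF h] y by auto
    have "\<not> x0 + e \<le> Kinf_inv h y"
      using mono_gain_mono[OF class_Kinf_imp_mono_gain[OF h], of "x0 + e" "Kinf_inv h y"] ky yb x0 e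
      by (auto simp: hi_def)
    then have "Kinf_inv h y < x0 + e" by simp
    moreover have "x0 - e < Kinf_inv h y"
    proof (rule ccontr)
      assume "\<not> ?thesis"
      then have "h (Kinf_inv h y) \<le> h (x0 - e)" "0 \<le> x0 - e"
        using mono_gain_mono[OF class_Kinf_imp_mono_gain[OF h] ky(1), of "x0 - e"] ky(1) by auto
      then show False using ky yb by (simp add: lo_def)
    qed
    ultimately show ?thesis by (simp add: dist_real_def x0_def[symmetric])
  qed
  then show "\<exists>d>0. \<forall>y\<in>{0..}. dist y y0 < d \<longrightarrow> dist (Kinf_inv h y) (Kinf_inv h y0) < e"
    using hi lo by (intro exI[of _ "min (hi - y0) (y0 - lo)"]) auto
qed

lemma mono_gain_Kinf_inv:
  assumes h: "class_Kinf h" shows "mono_gain (Kinf_inv h)"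
proof (rule mono_gainI)
  show "Kinf_inv h a \<le> Kinf_inv h b" if "0 \<le> a" "a \<le> b" for a b
    using Kinf_inv_le_iff[OF h Kinf_inv_nonneg[OF h, of b] that(1)] Kinf_inv_inverse[OF h, of b] that
    by simp
  show "Kinf_inv h 0 = 0"
    using Kinf_inv_le_iff[OF h order_refl order_refl] Kinf_inv_nonneg[OF h order_refl]
      mono_gain_zero[OF class_Kinf_imp_mono_gain[OF h]] by simp
qed (rule continuous_on_Kinf_inv[OF h])

lemma class_Kinf_add_ident:
  assumes "class_Kinf \<alpha>" shows "class_Kinf (\<lambda>x. x + \<alpha> x)"
proof -
  have "class_K (\<lambda>x. x + \<alpha> x)"
    by (rule mono_gain_add_ident_class_K[OF class_Kinf_imp_mono_gain[OF assms]])
  moreover have "filterlim (\<lambda>x. x + \<alpha> x) at_top at_top"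
    by (rule filterlim_at_top_mono[OF filterlim_ident])
       (auto simp: eventually_at_top_linorder intro!: exI[of _ 0]
          mono_gain_nonneg[OF class_Kinf_imp_mono_gain[OF assms]])
  ultimately show ?thesis by (simp add: class_Kinf_def)
qed

lemma bounded_linear_blk: "bounded_linear (blk b i)"
proof -
  have "linear (blk b i)"
    by (rule linearI) (auto simp: blk_def vec_eq_iff)
  then show ?thesis by (simp add: linear_conv_bounded_linear)
qed

lemma blk_idem [simp]: "blk b i (blk b i v) = blk b i v"
  by (auto simp: blk_def vec_eq_iff)

lemma blk_diff: "blk b i (v - w) = blk b i v - blk b i w"
  by (auto simp: blk_def vec_eq_iff)

lemma norm_blk_le: "norm (blk b i v) \<le> norm v"
  unfolding norm_vec_def by (intro L2_set_mono) (auto simp: blk_def)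

lemma sum_blk: "(\<Sum>i\<in>(UNIV::'i::finite set). blk b i v) = (v::real^'k)"
  by (simp add: vec_eq_iff blk_def sum_component sum.delta')

lemma norm_le_sum_blk: "norm (v::real^'k) \<le> (\<Sum>i\<in>(UNIV::'i::finite set). norm (blk b i v))"
  using norm_sum[of "\<lambda>i. blk b i v" UNIV] by (simp add: sum_blk)

section \<open>The mixed small-gain inequality\<close>

text \<open>The mixed operation \<open>\<oplus>\<close> in the \<open>i\<close>-th coordinate; \<open>IS\<close> is the index set \<open>I\<^sub>\<Sigma>\<close>.\<close>
definition mix :: "'i set \<Rightarrow> 'i \<Rightarrow> real \<Rightarrow> real \<Rightarrow> real" where
  "mix IS i a c = (if i \<in> IS then a + c else max a c)"

definition gain_fun :: "'i::finite set \<Rightarrow> ('i \<Rightarrow> 'i \<Rightarrow> real \<Rightarrow> real) \<Rightarrow> ('i \<Rightarrow> real) \<Rightarrow> 'i \<Rightarrow> real" where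
  "gain_fun IS g s i = (if i \<in> IS then (\<Sum>j\<in>UNIV. g i j (s j)) else Max (range (\<lambda>j. g i j (s j))))"

definition small_gain_condition :: "'i::finite set \<Rightarrow> ('i \<Rightarrow> 'i \<Rightarrow> real \<Rightarrow> real) \<Rightarrow> (real \<Rightarrow> real) \<Rightarrow> bool" where
  "small_gain_condition IS g \<alpha> \<longleftrightarrow>
     (\<forall>s::real^'i. (\<forall>i. 0 \<le> s $ i) \<and> s \<noteq> 0 \<longrightarrow> (\<exists>i. gain_op IS g (D_op IS \<alpha> s) $ i < s $ i))"

lemma mix_mono: "a \<le> a' \<Longrightarrow> c \<le> c' \<Longrightarrow> mix IS i a c \<le> mix IS i a' c'"
  by (auto simp: mix_def)

lemma mix_nonneg: "0 \<le> a \<Longrightarrow> 0 \<le> c \<Longrightarrow> 0 \<le> mix IS i a c"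
  by (auto simp: mix_def)

lemma Max_range_ge: "(f::'i::finite \<Rightarrow> real) j \<le> Max (range f)"
  by (rule Max_ge) auto

lemma gain_fun_nonneg:
  assumes "\<And>i j. mono_gain (g i j)" "\<And>j. 0 \<le> s j"
  shows "0 \<le> gain_fun IS g s i"
proof -
  have "0 \<le> g i j (s j)" for j using mono_gain_nonneg[OF assms] .
  moreover then have "0 \<le> Max (range (\<lambda>j. g i j (s j)))"
    using Max_range_ge[of "\<lambda>j. g i j (s j)"] order_trans by blast
  ultimately show ?thesis unfolding gain_fun_def by (auto intro: sum_nonneg)
qed

lemma gain_fun_mono:
  assumes "\<And>i j. mono_gain (g i j)" "\<And>j. 0 \<le> s j" "\<And>j. s j \<le> s' j"
  shows "gain_fun IS g s i \<le> gain_fun IS g s' i"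
proof -
  have "g i j (s j) \<le> g i j (s' j)" for j using mono_gain_mono[OF assms(1)] assms(2,3) .
  then show ?thesis unfolding gain_fun_def
    by (auto intro!: sum_mono Max.boundedI intro: order_trans[OF _ Max_range_ge])
qed

lemma small_gain_bounded_coordinate:
  fixes s w :: "'i::finite \<Rightarrow> real"
  assumes \<alpha>: "class_Kinf \<alpha>" and sg: "small_gain_condition IS g \<alpha>"
    and g: "\<And>i j. mono_gain (g i j)"
    and s: "\<And>i. 0 \<le> s i" "s \<noteq> (\<lambda>_. 0)"
    and w: "\<And>i. 0 \<le> w i" and ineq: "\<And>i. s i \<le> mix IS i (w i) (gain_fun IS g s i)"
  shows "\<exists>i. 0 < s i \<and> s i \<le> w i + Kinf_inv \<alpha> (w i)"
proof -
  define \<rho> where "\<rho> = (\<lambda>x::real. x + \<alpha> x)"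
  have \<rho>: "class_Kinf \<rho>" unfolding \<rho>_def by (rule class_Kinf_add_ident[OF \<alpha>])
  \<comment> \<open>the preimage of \<open>s\<close> under \<open>D\<^sub>\<alpha>\<close>\<close>
  define r where "r = (\<lambda>i. if i \<in> IS then Kinf_inv \<rho> (s i) else s i)"
  have r0: "0 \<le> r i" for i using Kinf_inv_nonneg[OF \<rho> s(1)] s(1) by (simp add: r_def)
  have Dr: "D_op IS \<alpha> (vec_lambda r) = vec_lambda s"
    using Kinf_inv_inverse[OF \<rho> s(1)] by (simp add: D_op_def r_def \<rho>_def vec_eq_iff)
  have "vec_lambda r \<noteq> 0"
  proof
    assume "vec_lambda r = 0"
    then have r_0: "r i = 0" for i by (simp add: vec_eq_iff)
    have "s i = 0" for i
    proof (cases "i \<in> IS")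
      case True
      then have "Kinf_inv \<rho> (s i) = 0" using r_0[of i] by (simp add: r_def)
      then show ?thesis
        using Kinf_inv_inverse[OF \<rho> s(1), of i] mono_gain_zero[OF class_Kinf_imp_mono_gain[OF \<rho>]]
        by simp
    qed (use r_0[of i] in \<open>simp add: r_def\<close>)
    then show False using s(2) by auto
  qed
  have gD: "gain_op IS g (D_op IS \<alpha> (vec_lambda r)) $ i = gain_fun IS g s i" for i
    by (simp add: Dr gain_op_def gain_fun_def)
  then obtain i where i: "gain_fun IS g s i < r i"
    using sg r0 \<open>vec_lambda r \<noteq> 0\<close> unfolding small_gain_condition_def
    by (metis vec_lambda_beta)
  have G0: "0 \<le> gain_fun IS g s i" by (rule gain_fun_nonneg[OF g s(1)])
  show ?thesis
  proof (cases "i \<in> IS")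
    case True
    have si: "s i = r i + \<alpha> (r i)"
      using Kinf_inv_inverse[OF \<rho> s(1), of i] True by (simp add: r_def \<rho>_def)
    have "s i \<le> w i + gain_fun IS g s i" using ineq[of i] True by (simp add: mix_def)
    then have "\<alpha> (r i) < w i" using i si by simp
    then have "r i \<le> Kinf_inv \<alpha> (w i)"
      using Kinf_inv_le_iff[OF \<alpha> r0 w] Kinf_inv_nonneg[OF \<alpha> w] by (meson linear not_le)
    moreover have "0 < s i"
      using si i G0 mono_gain_nonneg[OF class_Kinf_imp_mono_gain[OF \<alpha>] r0, of i] by linarith
    ultimately show ?thesis using si \<open>\<alpha> (r i) < w i\<close> by (intro exI[of _ i]) auto
  next
    case False
    have "s i \<le> max (w i) (gain_fun IS g s i)" using ineq[of i] False by (simp add: mix_def)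
    then have "s i \<le> w i" and "0 < s i" using i G0 False by (auto simp: r_def max_def split: if_splits)
    then show ?thesis using Kinf_inv_nonneg[OF \<alpha> w[of i]] by auto
  qed
qed

lemma mixed_ineq_zero_on:
  fixes s w :: "'i::finite \<Rightarrow> real"
  assumes g: "\<And>i j. mono_gain (g i j)"
    and s: "\<And>i. 0 \<le> s i" and w: "\<And>i. 0 \<le> w i"
    and ineq: "\<And>i. s i \<le> mix IS i (w i) (gain_fun IS g s i)"
    and B: "0 \<le> B" "\<And>k. k \<in> A \<Longrightarrow> s k \<le> B"
  defines "s' \<equiv> \<lambda>k. if k \<in> A then 0 else s k"
    and "w' \<equiv> \<lambda>j. w j + (\<Sum>k\<in>UNIV. g j k B)"
  shows "s' i \<le> mix IS i (w' i) (gain_fun IS g s' i)"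
proof -
  have s'0: "0 \<le> s' k" for k using s by (simp add: s'_def)
  have gB0: "0 \<le> g j k B" for j k using mono_gain_nonneg[OF g B(1)] .
  have w_w': "w j \<le> w' j" for j using gB0 by (simp add: w'_def sum_nonneg)
  have split: "g j k (s k) \<le> g j k (s' k) + g j k B" for j k
  proof (cases "k \<in> A")
    case True
    then show ?thesis
      using mono_gain_mono[OF g s, of k B] B(2) mono_gain_zero[OF g] by (simp add: s'_def)
  qed (use gB0 in \<open>simp add: s'_def\<close>)
  show ?thesis
  proof (cases "i \<in> A")
    case True
    then show ?thesis
      using mix_nonneg[OF order_trans[OF w w_w'] gain_fun_nonneg[OF g s'0]] by (simp add: s'_def)
  next
    case nA: False
    have "gain_fun IS g s i \<le> (if i \<in> IS then gain_fun IS g s' i + (\<Sum>k\<in>UNIV. g i k B)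
                                  else max (w' i) (gain_fun IS g s' i))"
    proof (cases "i \<in> IS")
      case True
      then show ?thesis using split by (simp add: gain_fun_def sum.distrib[symmetric] sum_mono)
    next
      case False
      have "g i k (s k) \<le> max (w' i) (gain_fun IS g s' i)" for k
      proof (cases "k \<in> A")
        case True
        have "g i k (s k) \<le> g i k B" using mono_gain_mono[OF g s] B(2)[OF True] .
        also have "\<dots> \<le> w' i"
          using member_le_sum[of k UNIV "\<lambda>k. g i k B"] gB0 w[of i] by (simp add: w'_def)
        finally show ?thesis by simp
      next
        case False
        then have "g i k (s k) \<le> gain_fun IS g s' i"
          using \<open>i \<notin> IS\<close> Max_range_ge[of "\<lambda>k. g i k (s' k)" k] by (simp add: gain_fun_def s'_def)
        then show ?thesis by simp
      qed
      then show ?thesis using False by (simp add: gain_fun_def Max_le_iff)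
    qed
    then show ?thesis using ineq[of i] w_w'[of i] nA by (auto simp: mix_def s'_def w'_def)
  qed
qed

definition total_gain :: "('i::finite \<Rightarrow> 'i \<Rightarrow> real \<Rightarrow> real) \<Rightarrow> real \<Rightarrow> real" where
  "total_gain g v = (\<Sum>i\<in>UNIV. \<Sum>j\<in>UNIV. g i j v)"

text \<open>After \<open>m\<close> rounds of the argument in \<open>mixed_ineq_bound_card\<close>, at least \<open>m\<close> coordinates
  of a solution of the mixed inequality with data bounded by \<open>W\<close> are bounded by \<open>sg_bound \<alpha> g m W\<close>.\<close>
primrec sg_bound :: "(real \<Rightarrow> real) \<Rightarrow> ('i::finite \<Rightarrow> 'i \<Rightarrow> real \<Rightarrow> real) \<Rightarrow> nat \<Rightarrow> real \<Rightarrow> real" where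
  "sg_bound \<alpha> g 0 W = 0"
| "sg_bound \<alpha> g (Suc m) W = sg_bound \<alpha> g m W + (W + total_gain g (sg_bound \<alpha> g m W))
                              + Kinf_inv \<alpha> (W + total_gain g (sg_bound \<alpha> g m W))"

lemma mono_gain_total_gain: "(\<And>i j. mono_gain (g i j)) \<Longrightarrow> mono_gain (total_gain g)"
  unfolding total_gain_def by (intro mono_gain_sum)

lemma mono_gain_sg_bound:
  assumes \<alpha>: "class_Kinf \<alpha>" and g: "\<And>i j. mono_gain (g i j)"
  shows "mono_gain (sg_bound \<alpha> g m)"
proof (induction m)
  case 0
  then show ?case by (simp add: mono_gainI)
next
  case (Suc m)
  have W: "mono_gain (\<lambda>W. W + total_gain g (sg_bound \<alpha> g m W))"
    by (intro mono_gain_add mono_gain_ident mono_gain_compose[OF mono_gain_total_gain[of g, OF g]] Suc)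
  show ?case
    unfolding sg_bound.simps
    by (intro mono_gain_add Suc W mono_gain_compose[OF mono_gain_Kinf_inv[OF \<alpha>]])
qed

lemma mixed_ineq_bound_card:
  fixes s w :: "'i::finite \<Rightarrow> real"
  assumes \<alpha>: "class_Kinf \<alpha>" and sg: "small_gain_condition IS g \<alpha>"
    and g: "\<And>i j. mono_gain (g i j)"
    and s: "\<And>i. 0 \<le> s i" and w: "\<And>i. 0 \<le> w i" "\<And>i. w i \<le> W"
    and ineq: "\<And>i. s i \<le> mix IS i (w i) (gain_fun IS g s i)"
  shows "\<exists>A. (m \<le> card A \<or> A = UNIV) \<and> (\<forall>i\<in>A. s i \<le> sg_bound \<alpha> g m W)"
proof (induction m)
  case 0
  then show ?case by (auto intro!: exI[of _ "{}"])
next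
  case (Suc m)
  then obtain A where A: "m \<le> card A \<or> A = UNIV" "\<forall>i\<in>A. s i \<le> sg_bound \<alpha> g m W" by blast
  let ?B = "sg_bound \<alpha> g m W"
  let ?V = "W + total_gain g ?B"
  have W0: "0 \<le> W" using w[of undefined] by linarith
  have B0: "0 \<le> ?B" using mono_gain_nonneg[OF mono_gain_sg_bound[OF \<alpha> g] W0] .
  have V0: "0 \<le> ?V" using mono_gain_nonneg[OF mono_gain_total_gain[of g, OF g] B0] W0 by simp
  have B_le: "?B \<le> sg_bound \<alpha> g (Suc m) W" and V_le: "?V + Kinf_inv \<alpha> ?V \<le> sg_bound \<alpha> g (Suc m) W"
    using B0 V0 Kinf_inv_nonneg[OF \<alpha> V0] by auto
  show ?case
  proof (cases "\<forall>i. i \<in> A \<or> s i = 0")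
    case True
    have "s i \<le> sg_bound \<alpha> g (Suc m) W" for i
      using True[rule_format, of i] A(2) B_le B0 by fastforce
    then have "\<forall>i. s i \<le> sg_bound \<alpha> g (Suc m) W" by blast
    then show ?thesis by (intro exI[of _ UNIV]) simp
  next
    case False
    define s' where "s' = (\<lambda>k. if k \<in> A then 0 else s k)"
    define w' where "w' = (\<lambda>j. w j + (\<Sum>k\<in>UNIV. g j k ?B))"
    have s'0: "0 \<le> s' i" for i using s by (simp add: s'_def)
    have w'0: "0 \<le> w' j" for j
      using w(1)[of j] mono_gain_nonneg[OF g B0] by (simp add: w'_def sum_nonneg)
    have w'V: "w' j \<le> ?V" for j
      using member_le_sum[of j UNIV "\<lambda>i. \<Sum>k\<in>UNIV. g i k ?B"] w(2)[of j] mono_gain_nonneg[OF g B0]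
      by (simp add: w'_def total_gain_def sum_nonneg)
    have ineq': "s' i \<le> mix IS i (w' i) (gain_fun IS g s' i)" for i
      unfolding s'_def w'_def by (rule mixed_ineq_zero_on[OF g s w(1) ineq B0]) (use A(2) in auto)
    have "s' \<noteq> (\<lambda>_. 0)" using False by (auto simp: s'_def fun_eq_iff)
    then obtain i where i: "0 < s' i" "s' i \<le> w' i + Kinf_inv \<alpha> (w' i)"
      using small_gain_bounded_coordinate[OF \<alpha> sg g s'0 _ w'0 ineq'] by blast
    have iA: "i \<notin> A" using i by (auto simp: s'_def)
    have "s i \<le> ?V + Kinf_inv \<alpha> ?V"
      using i iA w'V[of i] mono_gain_mono[OF mono_gain_Kinf_inv[OF \<alpha>] w'0 w'V, of i]
      by (simp add: s'_def)
    then have "\<forall>j\<in>insert i A. s j \<le> sg_bound \<alpha> g (Suc m) W" using A(2) B_le V_le by force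
    moreover have "Suc m \<le> card (insert i A) \<or> insert i A = UNIV"
      using A(1) iA by (auto simp: card_insert_if)
    ultimately show ?thesis by blast
  qed
qed

lemma mixed_ineq_bound:
  fixes s w :: "'i::finite \<Rightarrow> real"
  assumes "class_Kinf \<alpha>" "small_gain_condition IS g \<alpha>" "\<And>i j. mono_gain (g i j)"
    "\<And>i. 0 \<le> s i" "\<And>i. 0 \<le> w i" "\<And>i. w i \<le> W"
    "\<And>i. s i \<le> mix IS i (w i) (gain_fun IS g s i)"
  shows "s i \<le> sg_bound \<alpha> g CARD('i) W"
proof -
  obtain A where A: "CARD('i) \<le> card A \<or> A = UNIV" "\<forall>i\<in>A. s i \<le> sg_bound \<alpha> g CARD('i) W"
    using mixed_ineq_bound_card[OF assms] by blast
  have "A = UNIV" using A(1) card_seteq[of UNIV A] by auto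
  then show ?thesis using A(2) by auto
qed

section \<open>Solutions on bounded intervals\<close>

definition is_solution_on :: "(real \<Rightarrow> 'a::euclidean_space \<Rightarrow> 'a) \<Rightarrow> 'a \<Rightarrow> real \<Rightarrow> (real \<Rightarrow> 'a) \<Rightarrow> bool" where
  "is_solution_on G xi T x \<longleftrightarrow> x 0 = xi \<and> continuous_on {0..T} x
     \<and> (\<forall>t\<in>{0..T}. ((\<lambda>s. G s (x s)) has_integral (x t - xi)) {0..t})"

lemma is_solution_imp_on: "is_solution G xi x \<Longrightarrow> is_solution_on G xi T x"
  unfolding is_solution_def is_solution_on_def by (auto intro: continuous_on_subset)

lemma is_solution_on_le: "is_solution_on G xi T x \<Longrightarrow> T' \<le> T \<Longrightarrow> is_solution_on G xi T' x"
  unfolding is_solution_on_def by (auto intro: continuous_on_subset)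

lemma is_solution_on_zero: "is_solution_on G xi 0 (\<lambda>_. xi)"
  unfolding is_solution_on_def by (auto intro: has_integral_null)

lemma is_solutionI_on:
  assumes "\<And>T. is_solution_on G xi T x" shows "is_solution G xi x"
proof -
  have "continuous_on {0..} x"
    unfolding continuous_on_iff
  proof (intro ballI allI impI)
    fix t0 e :: real assume t0: "t0 \<in> {0..}" and e: "0 < e"
    have "continuous_on {0..t0+1} x" using assms[of "t0+1"] by (simp add: is_solution_on_def)
    then obtain d where "d > 0" "\<forall>t\<in>{0..t0+1}. dist t t0 < d \<longrightarrow> dist (x t) (x t0) < e"
      using t0 e unfolding continuous_on_iff by (metis atLeastAtMost_iff atLeast_iff le_add_same_cancel1 zero_le_one)
    then show "\<exists>d>0. \<forall>t\<in>{0..}. dist t t0 < d \<longrightarrow> dist (x t) (x t0) < e"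
      by (intro exI[of _ "min d 1"]) (auto simp: dist_real_def)
  qed
  moreover have "((\<lambda>s. G s (x s)) has_integral (x t - xi)) {0..t}" if "0 \<le> t" for t
    using assms[of t] that by (simp add: is_solution_on_def)
  ultimately show ?thesis using assms[of 0] unfolding is_solution_def is_solution_on_def by auto
qed

lemma is_solution_on_cong:
  assumes "is_solution_on G xi T x" "\<And>t. t \<in> {0..T} \<Longrightarrow> y t = x t" "0 \<le> T"
  shows "is_solution_on G xi T y"
  unfolding is_solution_on_def
proof (intro conjI ballI)
  show "y 0 = xi" using assms by (simp add: is_solution_on_def)
  show "continuous_on {0..T} y"
    using assms continuous_on_eq[of "{0..T}" x y] by (auto simp: is_solution_on_def)
  fix t assume t: "t \<in> {0..T}"
  have "((\<lambda>s. G s (x s)) has_integral (x t - xi)) {0..t}" using assms t by (simp add: is_solution_on_def)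
  then show "((\<lambda>s. G s (y s)) has_integral (y t - xi)) {0..t}"
    using assms t by (subst has_integral_cong[of _ _ "\<lambda>s. G s (x s)"]) auto
qed

lemma is_solution_on_integral:
  assumes "is_solution_on G xi T x" "0 \<le> a" "a \<le> t" "t \<le> T"
  shows "((\<lambda>s. G s (x s)) has_integral (x t - x a)) {a..t}"
proof -
  have h0t: "((\<lambda>s. G s (x s)) has_integral (x t - xi)) {0..t}"
    and h0a: "((\<lambda>s. G s (x s)) has_integral (x a - xi)) {0..a}"
    using assms by (auto simp: is_solution_on_def)
  have "(\<lambda>s. G s (x s)) integrable_on {a..t}"
    using integrable_subinterval_real[OF has_integral_integrable[OF h0t]] assms by auto
  then obtain I where I: "((\<lambda>s. G s (x s)) has_integral I) {a..t}" by blast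
  have "x a - xi + I = x t - xi"
    using has_integral_unique[OF has_integral_combine[OF assms(2,3) h0a I] h0t] .
  then have "I = x t - x a" by (simp add: algebra_simps)
  then show ?thesis using I by simp
qed

lemma is_solution_on_append:
  assumes x: "is_solution_on G xi a x" and a: "0 \<le> a"
    and y: "is_solution_on (\<lambda>s. G (s + a)) (x a) h y" and h: "0 \<le> h"
  shows "is_solution_on G xi (a + h) (\<lambda>t. if t \<le> a then x t else y (t - a))"
    (is "is_solution_on G xi _ ?z")
  unfolding is_solution_on_def
proof (intro conjI ballI)
  show "?z 0 = xi" using x a by (simp add: is_solution_on_def)
  have cx: "continuous_on {0..a} x" and cy: "continuous_on {0..h} y" and y0: "y 0 = x a"
    using x y by (auto simp: is_solution_on_def)
  have "continuous_on {t \<in> {0..a+h}. t \<le> a} x"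
    by (rule continuous_on_subset[OF cx]) auto
  moreover have "continuous_on {t \<in> {0..a+h}. a \<le> t} (\<lambda>t. y (t - a))"
    by (rule continuous_on_compose2[OF cy]) (auto intro!: continuous_intros)
  ultimately show "continuous_on {0..a+h} ?z"
    using y0 by (intro continuous_on_cases_le) (auto intro: continuous_intros)
  fix t assume t: "t \<in> {0..a+h}"
  show "((\<lambda>s. G s (?z s)) has_integral (?z t - xi)) {0..t}"
  proof (cases "t \<le> a")
    case True
    have "((\<lambda>s. G s (x s)) has_integral (x t - xi)) {0..t}" using x t True by (simp add: is_solution_on_def)
    then show ?thesis using True by (subst has_integral_cong[of _ _ "\<lambda>s. G s (x s)"]) auto
  next
    case False
    have "((\<lambda>s. G s (x s)) has_integral (x a - xi)) {0..a}"
      using x a by (auto simp: is_solution_on_def)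
    then have h0a: "((\<lambda>s. G s (?z s)) has_integral (x a - xi)) {0..a}"
      by (subst has_integral_cong[of _ _ "\<lambda>s. G s (x s)"]) auto
    have "((\<lambda>s. G (s + a) (y s)) has_integral (y (t - a) - x a)) {0..t-a}"
      using y t False by (simp add: is_solution_on_def)
    from has_integral_shift_real_ivl[OF this, of "-a"]
    have "((\<lambda>s. G s (y (s - a))) has_integral (y (t - a) - x a)) {a..t}" by simp
    then have hat: "((\<lambda>s. G s (?z s)) has_integral (y (t - a) - x a)) {a..t}"
      by (subst has_integral_cong[of _ _ "\<lambda>s. G s (y (s - a))"]) (auto simp: y0)
    from has_integral_combine[OF a _ h0a hat] False
    show ?thesis by simp
  qed
qed

lemma is_solution_append:
  assumes "is_solution_on G xi a x" "0 \<le> a" "is_solution (\<lambda>s. G (s + a)) (x a) y"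
  shows "is_solution G xi (\<lambda>t. if t \<le> a then x t else y (t - a))"
proof (rule is_solutionI_on)
  fix T
  have "is_solution_on G xi (a + max 0 (T - a)) (\<lambda>t. if t \<le> a then x t else y (t - a))"
    by (rule is_solution_on_append[OF assms(1,2) is_solution_imp_on[OF assms(3)]]) simp
  then show "is_solution_on G xi T (\<lambda>t. if t \<le> a then x t else y (t - a))"
    by (rule is_solution_on_le) simp
qed

lemma is_solution_on_bounded:
  assumes "is_solution_on G xi T x"
  obtains R where "\<And>t. t \<in> {0..T} \<Longrightarrow> norm (x t) \<le> R"
proof -
  have "compact (x ` {0..T})"
    using assms by (intro compact_continuous_image) (auto simp: is_solution_on_def)
  then show ?thesis using that compact_imp_bounded bounded_iff by (metis image_eqI)
qed

lemma step_length_exists: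
  fixes L M :: real
  assumes "0 \<le> L" "0 \<le> M"
  shows "\<exists>h>0. h * L \<le> 1/2 \<and> h * M < 1"
proof (intro exI conjI)
  let ?h = "min (1 / (2 * L + 2)) (1 / (2 * M + 2))"
  show "0 < ?h" using assms by simp
  have "?h * L \<le> (1 / (2 * L + 2)) * L" using assms by (intro mult_right_mono) auto
  also have "\<dots> \<le> 1/2" using assms by (simp add: field_simps)
  finally show "?h * L \<le> 1/2" .
  have "?h * M \<le> (1 / (2 * M + 2)) * M" using assms by (intro mult_right_mono) auto
  also have "\<dots> < 1" using assms by (simp add: field_simps)
  finally show "?h * M < 1" .
qed

lemma is_solution_on_unique_step:
  assumes x: "is_solution_on G xi T x" and y: "is_solution_on G xi T y"
    and L: "0 \<le> L" "\<And>s. s \<in> {0..T} \<Longrightarrow> norm (G s (x s) - G s (y s)) \<le> L * norm (x s - y s)"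
    and ab: "0 \<le> a" "a \<le> b" "b \<le> T" "(b - a) * L \<le> 1/2" and xa: "x a = y a"
  shows "\<forall>t\<in>{a..b}. x t = y t"
proof -
  have "continuous_on {a..b} (\<lambda>t. norm (x t - y t))"
    using x y ab by (auto simp: is_solution_on_def
        intro!: continuous_intros intro: continuous_on_subset)
  then obtain tm where tm: "tm \<in> {a..b}" "\<And>t. t \<in> {a..b} \<Longrightarrow> norm (x t - y t) \<le> norm (x tm - y tm)"
    using continuous_attains_sup[of "{a..b}" "\<lambda>t. norm (x t - y t)"] ab by auto
  define D where "D = norm (x tm - y tm)"
  have "norm (x t - y t) \<le> D / 2" if t: "t \<in> {a..b}" for t
  proof -
    have tT: "a \<le> t" "t \<le> T" using t ab by auto
    have "((\<lambda>s. G s (x s) - G s (y s)) has_integral (x t - y t)) {a..t}"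
      using has_integral_diff[OF is_solution_on_integral[OF x ab(1) tT] is_solution_on_integral[OF y ab(1) tT]] xa
      by simp
    moreover have "norm (G s (x s) - G s (y s)) \<le> L * D" if "s \<in> cbox a t" for s
    proof -
      have "s \<in> {0..T}" "s \<in> {a..b}" using that t ab by auto
      then show ?thesis
        using L(2)[of s] mult_left_mono[OF tm(2)[of s] L(1)] by (simp add: D_def)
    qed
    moreover have "0 \<le> L * D" using L(1) by (simp add: D_def)
    ultimately have "norm (x t - y t) \<le> L * D * Henstock_Kurzweil_Integration.content (cbox a t)"
      by (intro has_integral_bound) (simp_all add: cbox_interval)
    also have "\<dots> = (t - a) * L * D" using t by simp
    also have "\<dots> \<le> ((b - a) * L) * D"
      using t L(1) by (intro mult_right_mono) (auto simp: D_def)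
    also have "\<dots> \<le> D / 2" using mult_right_mono[OF ab(4), of D] by (simp add: D_def)
    finally show ?thesis .
  qed
  then have "D \<le> 0" using tm(1) by (fastforce simp: D_def)
  then show ?thesis using tm(2) by (force simp: D_def)
qed

lemma is_solution_on_unique:
  assumes x: "is_solution_on G xi T x" and y: "is_solution_on G xi T y"
    and L: "0 \<le> L" "\<And>s. s \<in> {0..T} \<Longrightarrow> norm (G s (x s) - G s (y s)) \<le> L * norm (x s - y s)"
  shows "\<forall>t\<in>{0..T}. x t = y t"
proof -
  obtain h where h: "0 < h" "h * L \<le> 1/2" using step_length_exists[OF L(1) order_refl] by blast
  have "\<forall>t\<in>{0..min T (real k * h)}. x t = y t" for k :: nat
  proof (induction k)
    case 0
    then show ?case using x y by (auto simp: is_solution_on_def)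
  next
    case (Suc k)
    define a where "a = min T (real k * h)"
    define b where "b = min T (real (Suc k) * h)"
    show ?case
    proof (cases "0 \<le> T")
      case True
      have ab: "0 \<le> a" "a \<le> b" "b \<le> T" "b - a \<le> h"
        using True h(1) by (auto simp: a_def b_def min_def algebra_simps)
      have "(b - a) * L \<le> 1/2"
        using mult_right_mono[OF ab(4) L(1)] h(2) by simp
      note ab = ab(1-3) this
      have "x a = y a" using Suc.IH ab(1) unfolding a_def by auto
      then have "\<forall>t\<in>{a..b}. x t = y t" using is_solution_on_unique_step[OF x y L ab] by blast
      then show ?thesis using Suc.IH by (auto simp: a_def b_def)
    qed simp
  qed
  moreover obtain k :: nat where "T / h \<le> real k" using real_arch_simple by blast
  then have "T \<le> real k * h" using h(1) by (simp add: field_simps)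
  ultimately show ?thesis by (metis atLeastAtMost_iff min.absorb1 min.cobounded1 order_trans)
qed

lemma is_solution_if_on_all:
  assumes ex: "\<And>T. 0 \<le> T \<Longrightarrow> \<exists>x. is_solution_on G xi T x"
    and uniq: "\<And>T x y. is_solution_on G xi T x \<Longrightarrow> is_solution_on G xi T y \<Longrightarrow> \<forall>t\<in>{0..T}. x t = y t"
  shows "\<exists>x. is_solution G xi x"
proof -
  have "\<forall>n::nat. \<exists>x. is_solution_on G xi (real n) x" using ex by simp
  then obtain X where X: "\<And>n::nat. is_solution_on G xi (real n) (X n)" by metis
  define n where "n = (\<lambda>t::real. nat \<lceil>t\<rceil>)"
  have n: "t \<le> real (n t)" for t unfolding n_def by linarith
  \<comment> \<open>by uniqueness, the solutions on the intervals [0, n] fit together\<close>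
  define Y where "Y = (\<lambda>t. X (n t) t)"
  have Y: "is_solution_on G xi T Y" if T: "0 \<le> T" for T
  proof (rule is_solution_on_cong[OF is_solution_on_le[OF X n] _ T])
    fix t assume t: "t \<in> {0..T}"
    have "\<forall>s\<in>{0..t}. X (n t) s = X (n T) s"
      by (rule uniq[OF is_solution_on_le[OF X n] is_solution_on_le[OF X]]) (use n[of T] t in auto)
    then show "Y t = X (n T) t" using t by (auto simp: Y_def)
  qed
  have "is_solution_on G xi T Y" for T
    using Y[of "max T 0"] is_solution_on_le[of G xi "max T 0" Y T] by simp
  then show ?thesis using is_solutionI_on by blast
qed

lemma blockwise_local_lipschitz:
  fixes f :: "real^'d \<Rightarrow> real^'m \<Rightarrow> real^'d" and b :: "'d \<Rightarrow> 'i::finite" and ub :: "'m \<Rightarrow> 'i"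
  assumes lip: "\<And>i r x0. \<exists>\<delta>>0. \<exists>L. \<forall>x\<in>ball x0 \<delta>. \<forall>y\<in>ball x0 \<delta>. \<forall>u.
                  norm (blk ub i u) \<le> r \<longrightarrow> norm (blk b i (f x u) - blk b i (f y u)) \<le> L * norm (x - y)"
  shows "\<exists>\<delta>>0. \<exists>L. \<forall>x\<in>ball x0 \<delta>. \<forall>y\<in>ball x0 \<delta>. \<forall>u. norm u \<le> r \<longrightarrow>
                  norm (f x u - f y u) \<le> L * norm (x - y)"
proof -
  have "\<forall>i. \<exists>\<delta>. \<delta> > 0 \<and> (\<exists>L. \<forall>x\<in>ball x0 \<delta>. \<forall>y\<in>ball x0 \<delta>. \<forall>u.
      norm (blk ub i u) \<le> r \<longrightarrow> norm (blk b i (f x u) - blk b i (f y u)) \<le> L * norm (x - y))"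
    using lip by blast
  then obtain \<delta> where \<delta>: "\<And>i. \<delta> i > 0" and "\<And>i. \<exists>L. \<forall>x\<in>ball x0 (\<delta> i). \<forall>y\<in>ball x0 (\<delta> i). \<forall>u.
      norm (blk ub i u) \<le> r \<longrightarrow> norm (blk b i (f x u) - blk b i (f y u)) \<le> L * norm (x - y)"
    by metis
  then obtain Lb where Lb: "\<And>i. \<forall>x\<in>ball x0 (\<delta> i). \<forall>y\<in>ball x0 (\<delta> i). \<forall>u.
      norm (blk ub i u) \<le> r \<longrightarrow> norm (blk b i (f x u) - blk b i (f y u)) \<le> Lb i * norm (x - y)"
    by metis
  define \<delta>0 where "\<delta>0 = Min (range \<delta>)"
  have "\<delta>0 > 0" unfolding \<delta>0_def using \<delta> by (subst Min_gr_iff) auto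
  moreover have \<delta>0: "\<delta>0 \<le> \<delta> i" for i unfolding \<delta>0_def by (rule Min_le) auto
  have "norm (f x u - f y u) \<le> (\<Sum>i\<in>UNIV. Lb i) * norm (x - y)"
    if x: "x \<in> ball x0 \<delta>0" and y: "y \<in> ball x0 \<delta>0" and u: "norm u \<le> r" for x y u
  proof -
    have "norm (f x u - f y u) \<le> (\<Sum>i\<in>(UNIV::'i set). norm (blk b i (f x u - f y u)))"
      by (rule norm_le_sum_blk)
    also have "\<dots> \<le> (\<Sum>i\<in>(UNIV::'i set). Lb i * norm (x - y))"
    proof (rule sum_mono)
      fix i :: 'i
      have "x \<in> ball x0 (\<delta> i)" "y \<in> ball x0 (\<delta> i)" using x y \<delta>0[of i] by auto
      moreover have "norm (blk ub i u) \<le> r" using norm_blk_le[of ub i u] u by linarith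
      ultimately show "norm (blk b i (f x u - f y u)) \<le> Lb i * norm (x - y)"
        using Lb[of i] by (auto simp: blk_diff)
    qed
    also have "\<dots> = (\<Sum>i\<in>UNIV. Lb i) * norm (x - y)" by (simp add: sum_distrib_right)
    finally show ?thesis .
  qed
  ultimately show ?thesis by blast
qed

lemma lipschitz_on_cball_uniform:
  fixes f :: "'a::euclidean_space \<Rightarrow> 'b::euclidean_space \<Rightarrow> 'c::real_normed_vector"
  assumes cont: "continuous_on UNIV (\<lambda>(x, u). f x u)"
    and lip: "\<And>x0. \<exists>\<delta>>0. \<exists>L. \<forall>x\<in>ball x0 \<delta>. \<forall>y\<in>ball x0 \<delta>. \<forall>u. norm u \<le> r \<longrightarrow>
                  norm (f x u - f y u) \<le> L * norm (x - y)"
  obtains L where "\<And>u. u \<in> cball 0 r \<Longrightarrow> L-lipschitz_on (cball 0 R) (\<lambda>x. f x u)"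
proof -
  have "local_lipschitz (cball 0 r) (cball 0 R) (\<lambda>u x. f x u)"
  proof (rule local_lipschitzI)
    fix u0 x0 assume "u0 \<in> cball (0::'b) r" "x0 \<in> cball (0::'a) R"
    obtain \<delta> L where \<delta>: "\<delta> > 0" "\<forall>x\<in>ball x0 \<delta>. \<forall>y\<in>ball x0 \<delta>. \<forall>u. norm u \<le> r \<longrightarrow>
        norm (f x u - f y u) \<le> L * norm (x - y)"
      using lip[of x0] by blast
    have "(max L 0)-lipschitz_on (cball x0 (\<delta>/2) \<inter> cball 0 R) (\<lambda>x. f x u)" if "u \<in> cball 0 r" for u
    proof (rule lipschitz_onI)
      fix x y assume "x \<in> cball x0 (\<delta>/2) \<inter> cball 0 R" "y \<in> cball x0 (\<delta>/2) \<inter> cball 0 R"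
      then have "norm (f x u - f y u) \<le> L * norm (x - y)" using \<delta> that by auto
      also have "\<dots> \<le> max L 0 * norm (x - y)" by (intro mult_right_mono) auto
      finally show "dist (f x u) (f y u) \<le> max L 0 * dist x y" by (simp add: dist_norm)
    qed simp
    then show "\<exists>e>0. \<exists>L. \<forall>u\<in>cball u0 e \<inter> cball 0 r. L-lipschitz_on (cball x0 e \<inter> cball 0 R) (\<lambda>x. f x u)"
      using \<delta>(1) by (intro exI[of _ "\<delta>/2"] conjI exI[of _ "max L 0"] ballI) auto
  qed
  moreover have "continuous_on (cball 0 r) (\<lambda>u. f x u)" for x
  proof -
    have "continuous_on (cball 0 r) (\<lambda>u. (x, u))" by (intro continuous_intros)
    from continuous_on_compose2[OF cont this] show ?thesis by simp
  qed
  ultimately show ?thesis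
    using local_lipschitz_compact_implies_lipschitz[OF _ compact_cball compact_cball] that by blast
qed

lemma blockwise_lipschitz_on_cball:
  fixes f :: "real^'d \<Rightarrow> real^'m \<Rightarrow> real^'d" and b :: "'d \<Rightarrow> 'i::finite" and ub :: "'m \<Rightarrow> 'i"
  assumes cont: "continuous_on UNIV (\<lambda>(x, u). f x u)"
    and lip: "\<And>i r x0. \<exists>\<delta>>0. \<exists>L. \<forall>x\<in>ball x0 \<delta>. \<forall>y\<in>ball x0 \<delta>. \<forall>u.
                  norm (blk ub i u) \<le> r \<longrightarrow> norm (blk b i (f x u) - blk b i (f y u)) \<le> L * norm (x - y)"
  shows "\<exists>L. \<forall>u\<in>cball 0 r. L-lipschitz_on (cball 0 R) (\<lambda>x. f x u)"
proof -
  obtain L where "\<And>u. u \<in> cball 0 r \<Longrightarrow> L-lipschitz_on (cball 0 R) (\<lambda>x. f x u)"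
    using lipschitz_on_cball_uniform[where r = r and R = R, OF cont blockwise_local_lipschitz[OF lip]]
    by blast
  then show ?thesis by blast
qed

lemma is_solution_on_unique_lipschitz:
  fixes f :: "'a::euclidean_space \<Rightarrow> 'b::euclidean_space \<Rightarrow> 'a"
  assumes lip: "\<And>R. \<exists>L. \<forall>u\<in>cball 0 r. L-lipschitz_on (cball 0 R) (\<lambda>x. f x u)"
    and v: "\<And>t. norm (v t) \<le> r"
    and x: "is_solution_on (\<lambda>s z. f z (v s)) xi T x" and y: "is_solution_on (\<lambda>s z. f z (v s)) xi T y"
  shows "\<forall>t\<in>{0..T}. x t = y t"
proof -
  obtain R1 where R1: "\<And>t. t \<in> {0..T} \<Longrightarrow> norm (x t) \<le> R1"
    using is_solution_on_bounded[OF x] by blast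
  obtain R2 where R2: "\<And>t. t \<in> {0..T} \<Longrightarrow> norm (y t) \<le> R2"
    using is_solution_on_bounded[OF y] by blast
  obtain L where L: "\<forall>u\<in>cball 0 r. L-lipschitz_on (cball 0 (max R1 R2)) (\<lambda>x. f x u)"
    using lip by blast
  have "norm (f (x s) (v s) - f (y s) (v s)) \<le> L * norm (x s - y s)" if "s \<in> {0..T}" for s
    using lipschitz_onD[OF L[rule_format, of "v s"], of "x s" "y s"] v[of s] R1[OF that] R2[OF that]
    by (simp add: dist_norm)
  moreover have "0 \<le> L" using lipschitz_on_nonneg L[rule_format, of "v 0"] v[of 0] by simp
  ultimately show ?thesis by (intro is_solution_on_unique[OF x y]) auto
qed

lemma linf_norm_le:
  assumes "\<And>t. 0 \<le> t \<Longrightarrow> norm (v t) \<le> B" "0 \<le> B"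
  shows "linf_norm v \<le> B" "0 \<le> linf_norm v"
proof -
  have B: "B \<in> {B. 0 \<le> B \<and> (AE t in lborel. 0 \<le> t \<longrightarrow> norm (v t) \<le> B)}"
    using assms by auto
  show "linf_norm v \<le> B" unfolding linf_norm_def
    by (rule cInf_lower[OF B]) (auto intro!: bdd_belowI[of _ 0])
  show "0 \<le> linf_norm v" unfolding linf_norm_def
    by (rule cInf_greatest) (use B in auto)
qed

lemma Linf_AE_le:
  assumes "Linf u"
  shows "AE t in lborel. 0 \<le> t \<longrightarrow> norm (u t) \<le> linf_norm u" and "0 \<le> linf_norm u"
proof -
  let ?S = "{B. 0 \<le> B \<and> (AE t in lborel. 0 \<le> t \<longrightarrow> norm (u t) \<le> B)}"
  obtain B0 where B0: "AE t in lborel. 0 \<le> t \<longrightarrow> norm (u t) \<le> B0" using assms by (auto simp: Linf_def)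
  have "AE t in lborel. 0 \<le> t \<longrightarrow> norm (u t) \<le> max B0 0" using B0
    by eventually_elim auto
  then have "max B0 0 \<in> ?S" by simp
  then have ne: "?S \<noteq> {}" by blast
  show "0 \<le> linf_norm u" unfolding linf_norm_def by (rule cInf_greatest[OF ne]) auto
  have "AE t in lborel. 0 \<le> t \<longrightarrow> norm (u t) \<le> linf_norm u + 1 / Suc n" for n :: nat
  proof -
    have "Inf ?S < linf_norm u + 1 / Suc n" by (simp add: linf_norm_def)
    then obtain B where B: "B \<in> ?S" "B < linf_norm u + 1 / Suc n"
      using cInf_lessD[OF ne] by blast
    then have "AE t in lborel. 0 \<le> t \<longrightarrow> norm (u t) \<le> B" by simp
    then show ?thesis
    proof eventually_elim
      case (elim t) then show ?case using B(2) by auto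
    qed
  qed
  then have "AE t in lborel. \<forall>n::nat. 0 \<le> t \<longrightarrow> norm (u t) \<le> linf_norm u + 1 / Suc n"
    by (subst AE_all_countable) blast
  then show "AE t in lborel. 0 \<le> t \<longrightarrow> norm (u t) \<le> linf_norm u"
  proof eventually_elim
    case (elim t)
    show ?case
    proof
      assume "0 \<le> t"
      show "norm (u t) \<le> linf_norm u"
      proof (rule field_le_epsilon)
        fix e :: real assume "0 < e"
        obtain n :: nat where "inverse (real (Suc n)) < e" using reals_Archimedean[OF \<open>0 < e\<close>] by blast
        then have n: "1 / real (Suc n) < e" by (simp add: inverse_eq_divide)
        have "norm (u t) \<le> linf_norm u + 1 / Suc n" using elim \<open>0 \<le> t\<close> by blast
        then show "norm (u t) \<le> linf_norm u + e" using n by linarith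
      qed
    qed
  qed
qed

lemma LinfI_bounded:
  "(\<lambda>t. indicator {0..} t *\<^sub>R v t) \<in> borel_measurable borel \<Longrightarrow> (\<And>t. norm (v t) \<le> B) \<Longrightarrow> Linf v"
  unfolding Linf_def by auto

lemma Linf_shift:
  fixes v :: "real \<Rightarrow> 'a::euclidean_space"
  assumes v: "Linf v" "\<And>t. norm (v t) \<le> r" and a: "0 \<le> a"
  shows "Linf (\<lambda>t. v (t + a))"
proof (rule LinfI_bounded[OF _ v(2)])
  have "(\<lambda>t. indicator {0..} t *\<^sub>R v t) \<in> borel_measurable borel"
    using v(1) by (simp add: Linf_def)
  then have "(\<lambda>t. indicator {0..} (t + a) *\<^sub>R v (t + a)) \<in> borel_measurable borel"
    using measurable_compose[of "\<lambda>t. t + a" borel borel] by simp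
  then have "(\<lambda>t. indicator {0..} t *\<^sub>R (indicator {0..} (t + a) *\<^sub>R v (t + a))) \<in> borel_measurable borel"
    by measurable
  moreover have "(\<lambda>t. indicator {0..} t *\<^sub>R (indicator {0..} (t + a) *\<^sub>R v (t + a)))
      = (\<lambda>t. indicator {0..} t *\<^sub>R v (t + a))"
    using a by (auto simp: indicator_def fun_eq_iff)
  ultimately show "(\<lambda>t. indicator {0..} t *\<^sub>R v (t + a)) \<in> borel_measurable borel" by simp
qed

section \<open>Existence of solutions\<close>

lemma caratheodory_integrable:
  fixes H :: "'a::euclidean_space \<Rightarrow> 'b::euclidean_space \<Rightarrow> 'c::euclidean_space" and \<psi> :: "real \<Rightarrow> 'a"
  assumes H: "continuous_on UNIV (\<lambda>z. H (fst z) (snd z))" and V: "V \<in> borel_measurable borel"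
    and \<psi>: "continuous_on UNIV \<psi>" and M: "\<And>s. norm (H (\<psi> s) (V s)) \<le> M"
  shows "(\<lambda>s. H (\<psi> s) (V s)) integrable_on {a..b}"
proof (rule measurable_bounded_by_integrable_imp_integrable[where g = "\<lambda>_. M"])
  have "(\<lambda>s. H (\<psi> s) (V s)) \<in> borel_measurable borel"
    by (rule borel_measurable_continuous_Pair[OF borel_measurable_continuous_onI[OF \<psi>] V H])
  then show "(\<lambda>s. H (\<psi> s) (V s)) \<in> borel_measurable (lebesgue_on {a..b})"
    by (simp add: measurable_completion measurable_restrict_space1)
  show "(\<lambda>_. M) integrable_on {a..b}" using integrable_const[of M a b] by (simp add: cbox_interval)
qed (use M in auto)

lemma norm_integral_diff_le:
  fixes F :: "real \<Rightarrow> 'a::euclidean_space"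
  assumes "\<And>c. F integrable_on {0..c}" "\<And>s. norm (F s) \<le> M" "0 \<le> a" "a \<le> b"
  shows "norm (integral {0..b} F - integral {0..a} F) \<le> M * (b - a)"
proof -
  have "integral {0..b} F - integral {0..a} F = integral {a..b} F"
    using Henstock_Kurzweil_Integration.integral_combine[OF assms(3,4) assms(1)] by (simp add: algebra_simps)
  also have "norm \<dots> \<le> M * Henstock_Kurzweil_Integration.content (cbox a b)"
  proof (rule has_integral_bound)
    show "0 \<le> M" using norm_ge_zero assms(2) order_trans by blast
    have "F integrable_on {a..b}" by (rule integrable_subinterval_real[OF assms(1)]) (use assms in auto)
    then show "(F has_integral integral {a..b} F) (cbox a b)" by (simp add: cbox_interval integrable_integral)
  qed (rule assms(2))
  finally show ?thesis using assms(4) by simp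
qed

lemma bcontfun_clamped_integral:
  fixes F :: "real \<Rightarrow> 'a::euclidean_space"
  assumes int: "\<And>c. F integrable_on {0..c}" and M: "\<And>s. norm (F s) \<le> M" and h: "0 \<le> h"
  shows "(\<lambda>t. xi + integral {0..max 0 (min h t)} F) \<in> bcontfun"
proof (rule bcontfun_normI)
  define cl where "cl = (\<lambda>t::real. max 0 (min h t))"
  have cl: "0 \<le> cl t" "cl t \<le> h" "\<bar>cl t - cl t'\<bar> \<le> \<bar>t - t'\<bar>" for t t'
    using h by (auto simp: cl_def)
  have M0: "0 \<le> M" using M norm_ge_zero order_trans by blast
  have "M-lipschitz_on UNIV (\<lambda>t. xi + integral {0..cl t} F)"
  proof (rule lipschitz_onI)
    fix t t' :: real
    have "dist (xi + integral {0..cl t} F) (xi + integral {0..cl t'} F) \<le> M * \<bar>cl t - cl t'\<bar>"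
      using norm_integral_diff_le[OF int M, of "min (cl t) (cl t')" "max (cl t) (cl t')"] cl[of t] cl[of t']
      by (cases "cl t \<le> cl t'") (auto simp: dist_norm norm_minus_commute)
    also have "\<dots> \<le> M * dist t t'" using cl(3) M0 by (simp add: dist_real_def mult_left_mono)
    finally show "dist (xi + integral {0..cl t} F) (xi + integral {0..cl t'} F) \<le> M * dist t t'" .
  qed (rule M0)
  then show "continuous_on UNIV (\<lambda>t. xi + integral {0..max 0 (min h t)} F)"
    unfolding cl_def by (rule lipschitz_on_continuous_on)
  fix t
  have "norm (integral {0..cl t} F) \<le> M * cl t"
    using norm_integral_diff_le[OF int M, of 0 "cl t"] cl[of t] by simp
  also have "\<dots> \<le> M * h" using cl M0 by (simp add: mult_left_mono)
  finally show "norm (xi + integral {0..max 0 (min h t)} F) \<le> norm xi + M * h"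
    using norm_triangle_ineq[of xi "integral {0..cl t} F"] unfolding cl_def by linarith
qed

lemma integral_equation_fixed_point:
  fixes H :: "real \<Rightarrow> 'a::euclidean_space \<Rightarrow> 'a"
  assumes M: "\<And>s x. norm (H s x) \<le> M"
    and L: "0 \<le> L" "\<And>s x y. norm (H s x - H s y) \<le> L * norm (x - y)"
    and int: "\<And>\<psi> a b. continuous_on UNIV \<psi> \<Longrightarrow> (\<lambda>s. H s (\<psi> s)) integrable_on {a..b}"
    and h: "0 < h" "h * L \<le> 1/2"
  obtains \<phi> where "continuous_on UNIV \<phi>" "\<And>t. t \<in> {0..h} \<Longrightarrow> \<phi> t = xi + integral {0..t} (\<lambda>s. H s (\<phi> s))"
proof -
  \<comment> \<open>clamping time to [0,h] makes the Picard operator act on bounded continuous functions on \<real>\<close>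
  define cl where "cl = (\<lambda>t::real. max 0 (min h t))"
  have cl: "0 \<le> cl t" "cl t \<le> h" "\<bar>cl t - cl t'\<bar> \<le> \<bar>t - t'\<bar>" for t t'
    using h by (auto simp: cl_def)
  define I where "I = (\<lambda>\<psi> c. integral {0..c} (\<lambda>s. H s (\<psi> s)))"
  define Pf where "Pf = (\<lambda>\<psi>::(real, 'a) bcontfun. \<lambda>t. xi + I (apply_bcontfun \<psi>) (cl t))"
  have "Pf \<psi> \<in> bcontfun" for \<psi>
    unfolding Pf_def I_def cl_def using h(1) by (intro bcontfun_clamped_integral[OF int M]) auto
  then have Pa: "apply_bcontfun (Bcontfun (Pf \<psi>)) = Pf \<psi>" for \<psi> by (simp add: Bcontfun_inverse)
  have "dist (Bcontfun (Pf \<psi>1)) (Bcontfun (Pf \<psi>2)) \<le> (1/2) * dist \<psi>1 \<psi>2" for \<psi>1 \<psi>2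
  proof (rule dist_bound)
    fix t
    let ?c = "cl t" and ?a = "apply_bcontfun \<psi>1" and ?b = "apply_bcontfun \<psi>2"
    have "((\<lambda>s. H s (?a s) - H s (?b s)) has_integral (I ?a ?c - I ?b ?c)) {0..?c}"
      unfolding I_def by (intro has_integral_diff integrable_integral int) simp_all
    moreover have "norm (H s (?a s) - H s (?b s)) \<le> L * dist \<psi>1 \<psi>2" for s
    proof -
      have "norm (?a s - ?b s) \<le> dist \<psi>1 \<psi>2" using dist_bounded[of \<psi>1 s \<psi>2] by (simp add: dist_norm)
      then show ?thesis using L(2)[of s "?a s" "?b s"] mult_left_mono[OF _ L(1)] by (meson order_trans)
    qed
    ultimately have "norm (I ?a ?c - I ?b ?c) \<le> L * dist \<psi>1 \<psi>2 * Henstock_Kurzweil_Integration.content (cbox 0 ?c)"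
      using L(1) by (intro has_integral_bound) auto
    also have "\<dots> = (cl t * L) * dist \<psi>1 \<psi>2" using cl by simp
    also have "\<dots> \<le> (h * L) * dist \<psi>1 \<psi>2" using cl L(1) by (intro mult_right_mono) auto
    also have "\<dots> \<le> (1/2) * dist \<psi>1 \<psi>2" by (rule mult_right_mono[OF h(2) zero_le_dist])
    finally show "dist (Bcontfun (Pf \<psi>1) t) (Bcontfun (Pf \<psi>2) t) \<le> (1/2) * dist \<psi>1 \<psi>2"
      unfolding Pa by (simp add: Pf_def dist_norm)
  qed
  then obtain \<phi> where "Bcontfun (Pf \<phi>) = \<phi>"
    using banach_fix_type[of "1/2" "\<lambda>\<psi>. Bcontfun (Pf \<psi>)"] by auto
  then have fx: "apply_bcontfun \<phi> t = xi + I \<phi> (cl t)" for t by (metis Pa Pf_def)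
  show ?thesis
  proof (rule that)
    show "continuous_on UNIV \<phi>" by simp
    show "\<phi> t = xi + integral {0..t} (\<lambda>s. H s (\<phi> s))" if "t \<in> {0..h}" for t
      using fx[of t] that by (simp add: I_def cl_def)
  qed
qed

lemma nonexpansive_retraction_cball:
  fixes xi :: "'a::euclidean_space"
  assumes "0 \<le> \<rho>"
  obtains p where "continuous_on UNIV p" "\<And>x. p x \<in> cball xi \<rho>"
    "\<And>x y. dist (p x) (p y) \<le> dist x y" "\<And>x. x \<in> cball xi \<rho> \<Longrightarrow> p x = x"
proof
  have K: "convex (cball xi \<rho>)" "closed (cball xi \<rho>)" "cball xi \<rho> \<noteq> {}" using assms by auto
  show "continuous_on UNIV (closest_point (cball xi \<rho>))" by (rule continuous_on_closest_point[OF K])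
  show "closest_point (cball xi \<rho>) x \<in> cball xi \<rho>" for x by (rule closest_point_in_set[OF K(2,3)])
  show "dist (closest_point (cball xi \<rho>) x) (closest_point (cball xi \<rho>) y) \<le> dist x y" for x y
    by (rule closest_point_lipschitz[OF K])
  show "closest_point (cball xi \<rho>) x = x" if "x \<in> cball xi \<rho>" for x by (rule closest_point_self[OF that])
qed

lemma picard_local_existence:
  fixes f :: "'a::euclidean_space \<Rightarrow> 'b::euclidean_space \<Rightarrow> 'a" and v :: "real \<Rightarrow> 'b"
  assumes fc: "continuous_on UNIV (\<lambda>(x, u). f x u)"
    and lip: "\<forall>u\<in>cball 0 r. L-lipschitz_on (cball 0 (R + 1)) (\<lambda>x. f x u)"
    and M: "\<And>u x. u \<in> cball 0 r \<Longrightarrow> x \<in> cball 0 (R + 1) \<Longrightarrow> norm (f x u) \<le> M"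
    and h: "0 < h" "h * L \<le> 1/2" "h * M < 1"
    and xi: "norm xi \<le> R"
    and v: "Linf v" "\<And>t. norm (v t) \<le> r"
  shows "\<exists>\<phi>. is_solution_on (\<lambda>s z. f z (v s)) xi h \<phi>"
proof -
  \<comment> \<open>Modify the right-hand side outside \<open>cball xi 1\<close> (by the retraction \<open>p\<close>) and outside [0,\<infinity>);
    the solution of the modified equation stays in \<open>cball xi 1\<close>, where both agree.\<close>
  obtain p where pc: "continuous_on UNIV p" and p_in: "\<And>x. p x \<in> cball xi 1"
    and p_lip: "\<And>x y. dist (p x) (p y) \<le> dist x y" and p_id: "\<And>x. x \<in> cball xi 1 \<Longrightarrow> p x = x"
    using nonexpansive_retraction_cball[of 1 xi] by auto
  have pK: "p x \<in> cball 0 (R + 1)" for x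
    using p_in[of x] xi norm_triangle_ineq[of xi "p x - xi"] by (simp add: dist_norm norm_minus_commute)
  define V where "V = (\<lambda>t. indicator {0..} t *\<^sub>R v t)"
  have r0: "0 \<le> r" using norm_ge_zero[of "v 0"] v(2)[of 0] by linarith
  have V: "V t \<in> cball 0 r" for t using v(2)[of t] r0 by (auto simp: V_def indicator_def)
  have L0: "0 \<le> L" using lip V[of 0] lipschitz_on_nonneg by blast
  define H where "H = (\<lambda>s x. f (p x) (V s))"
  have HM: "norm (H s x) \<le> M" for s x unfolding H_def by (rule M[OF V pK])
  have Hlip: "norm (H s x - H s y) \<le> L * norm (x - y)" for s x y
  proof -
    have "norm (H s x - H s y) \<le> L * dist (p x) (p y)"
      using lipschitz_onD[OF lip[rule_format, OF V] pK pK] by (simp add: H_def dist_norm)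
    also have "\<dots> \<le> L * norm (x - y)"
      using p_lip[of x y] L0 by (simp add: dist_norm mult_left_mono)
    finally show ?thesis .
  qed
  have Hint: "(\<lambda>s. H s (\<psi> s)) integrable_on {a..b}" if "continuous_on UNIV \<psi>" for \<psi> a b
  proof -
    have "continuous_on UNIV (\<lambda>z. (p (fst z), snd z))"
      by (intro continuous_intros continuous_on_compose2[OF pc]) auto
    from continuous_on_compose2[OF fc this]
    have "continuous_on UNIV (\<lambda>z. f (p (fst z)) (snd z))" by simp
    moreover have "V \<in> borel_measurable borel" using v(1) by (simp add: V_def Linf_def)
    ultimately show ?thesis
      using caratheodory_integrable[where H = "\<lambda>x u. f (p x) u" and V = V and \<psi> = \<psi> and M = M]
        that M[OF V pK] by (simp add: H_def)
  qed
  obtain \<phi> where \<phi>: "continuous_on UNIV \<phi>"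
    "\<And>t. t \<in> {0..h} \<Longrightarrow> \<phi> t = xi + integral {0..t} (\<lambda>s. H s (\<phi> s))"
    using integral_equation_fixed_point[OF HM L0 Hlip Hint h(1,2)] by blast
  have int: "((\<lambda>s. H s (\<phi> s)) has_integral (\<phi> t - xi)) {0..t}" if "t \<in> {0..h}" for t
    using integrable_integral[OF Hint[OF \<phi>(1)]] \<phi>(2)[OF that] by simp
  have M0: "0 \<le> M" using HM norm_ge_zero order_trans by blast
  have inK: "\<phi> t \<in> cball xi 1" if t: "t \<in> {0..h}" for t
  proof -
    have "norm (\<phi> t - xi) \<le> M * Henstock_Kurzweil_Integration.content (cbox 0 t)"
      using int[OF t] HM M0 by (intro has_integral_bound) (auto simp: cbox_interval)
    also have "\<dots> \<le> M * h" using t M0 by (simp add: mult_left_mono)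
    also have "\<dots> < 1" using h(3) by (simp add: mult.commute)
    finally show ?thesis by (simp add: dist_norm norm_minus_commute)
  qed
  have "is_solution_on (\<lambda>s z. f z (v s)) xi h \<phi>"
    unfolding is_solution_on_def
  proof (intro conjI ballI)
    show "\<phi> 0 = xi" using \<phi>(2)[of 0] h(1) by simp
    show "continuous_on {0..h} \<phi>" using \<phi>(1) by (rule continuous_on_subset) simp
    fix t assume t: "t \<in> {0..h}"
    have "H s (\<phi> s) = f (\<phi> s) (v s)" if "s \<in> {0..t}" for s
      using inK[of s] p_id that t by (simp add: H_def V_def)
    then show "((\<lambda>s. f (\<phi> s) (v s)) has_integral (\<phi> t - xi)) {0..t}"
      using int[OF t] by (subst has_integral_cong[symmetric]) auto
  qed
  then show ?thesis by blast
qed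

lemma global_existence:
  fixes f :: "'a::euclidean_space \<Rightarrow> 'b::euclidean_space \<Rightarrow> 'a"
  assumes fc: "continuous_on UNIV (\<lambda>(x, u). f x u)"
    and lip: "\<And>R. \<exists>L. \<forall>u\<in>cball 0 r. L-lipschitz_on (cball 0 R) (\<lambda>x. f x u)"
    and v: "Linf v" "\<And>t. norm (v t) \<le> r"
    and bound: "\<And>T x t. is_solution_on (\<lambda>s z. f z (v s)) xi T x \<Longrightarrow> t \<in> {0..T} \<Longrightarrow> norm (x t) \<le> C"
  shows "\<exists>x. is_solution (\<lambda>s z. f z (v s)) xi x"
proof -
  let ?G = "\<lambda>s z. f z (v s)"
  have r0: "0 \<le> r" using norm_ge_zero[of "v 0"] v(2)[of 0] by linarith
  obtain L where L: "\<forall>u\<in>cball 0 r. L-lipschitz_on (cball 0 (C + 1)) (\<lambda>x. f x u)"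
    using lip by blast
  have L0: "0 \<le> L" using lipschitz_on_nonneg L[rule_format, of 0] r0 by simp
  have "compact ((\<lambda>(x, u). f x u) ` (cball 0 (C + 1) \<times> cball 0 r))"
    by (intro compact_continuous_image continuous_on_subset[OF fc] compact_Times) auto
  then obtain M where M: "\<forall>z\<in>(\<lambda>(x, u). f x u) ` (cball 0 (C + 1) \<times> cball 0 r). norm z \<le> M"
    using compact_imp_bounded bounded_iff by metis
  have Mb: "norm (f x u) \<le> M" if "u \<in> cball 0 r" "x \<in> cball 0 (C + 1)" for u x
    using M that by force
  have C0: "norm xi \<le> C" using bound[OF is_solution_on_zero, of 0] by simp
  have "norm (f 0 0) \<le> M" using Mb[of 0 0] r0 C0 norm_ge_zero[of xi] by simp
  then have M0: "0 \<le> M" using norm_ge_zero[of "f 0 0"] by linarith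
  \<comment> \<open>a step length that works from every initial value allowed by the a priori bound\<close>
  obtain h where h: "0 < h" "h * L \<le> 1/2" "h * M < 1"
    using step_length_exists[OF L0 M0] by blast
  have ex: "\<exists>x. is_solution_on ?G xi (real k * h) x" for k :: nat
  proof (induction k)
    case 0
    then show ?case using is_solution_on_zero by auto
  next
    case (Suc k)
    then obtain x where x: "is_solution_on ?G xi (real k * h) x" by blast
    let ?a = "real k * h"
    have a0: "0 \<le> ?a" using h(1) by simp
    have "norm (x ?a) \<le> C" by (rule bound[OF x]) (use a0 in simp)
    then obtain \<phi> where \<phi>: "is_solution_on (\<lambda>s z. f z (v (s + ?a))) (x ?a) h \<phi>"
      using picard_local_existence[OF fc L Mb h _ Linf_shift[OF v a0] v(2)] by blast
    have "is_solution_on ?G xi (?a + h) (\<lambda>t. if t \<le> ?a then x t else \<phi> (t - ?a))"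
      by (rule is_solution_on_append[OF x a0 _ less_imp_le[OF h(1)]]) (use \<phi> in simp)
    then show ?case by (auto simp: algebra_simps)
  qed
  show ?thesis
  proof (rule is_solution_if_on_all)
    fix T :: real
    obtain k :: nat where "T / h \<le> real k" using real_arch_simple by blast
    then have "T \<le> real k * h" using h(1) by (simp add: field_simps)
    then show "\<exists>x. is_solution_on ?G xi T x" using ex[of k] is_solution_on_le by blast
  qed (rule is_solution_on_unique_lipschitz[OF lip v(2)])
qed

section \<open>The interconnection\<close>

lemma mix_gain_fun_eq:
  "(if i \<in> IS then a + (\<Sum>j\<in>UNIV. g i j (c j)) + e else max a (max (Max (range (\<lambda>j. g i j (c j)))) e))
     = mix IS i (mix IS i a e) (gain_fun IS g c i)"
  by (auto simp: mix_def gain_fun_def max.left_commute max.commute)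

definition subsystems_GS :: "('d \<Rightarrow> 'i::finite) \<Rightarrow> (real^'d \<Rightarrow> real^'m \<Rightarrow> real^'d) \<Rightarrow> 'i set
    \<Rightarrow> ('i \<Rightarrow> real \<Rightarrow> real) \<Rightarrow> ('i \<Rightarrow> 'i \<Rightarrow> real \<Rightarrow> real) \<Rightarrow> ('i \<Rightarrow> real \<Rightarrow> real) \<Rightarrow> bool" where
  "subsystems_GS b f IS \<sigma> g gu \<longleftrightarrow> (\<forall>i xi w u. blk b i xi = xi \<longrightarrow> Linf w \<longrightarrow> Linf u \<longrightarrow>
      (\<exists>y. is_solution (sub_rhs b f i w u) xi y)
    \<and> (\<forall>y. is_solution (sub_rhs b f i w u) xi y \<longrightarrow> (\<forall>t\<ge>0.
         norm (y t) \<le> mix IS i (mix IS i (\<sigma> i (norm xi)) (gu i (linf_norm u)))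
           (gain_fun IS g (\<lambda>j. linf_norm (trunc 0 t (\<lambda>s. blk b j (y s + (w s - blk b i (w s)))))) i))))"

lemma Linf_trunc_continuous:
  fixes x :: "real \<Rightarrow> 'a::euclidean_space"
  assumes cx: "continuous_on {0..T} x"
  obtains R where "Linf (trunc 0 T x)" "\<And>t. norm (trunc 0 T x t) \<le> R"
proof -
  have "compact (x ` {0..T})" by (rule compact_continuous_image[OF cx compact_Icc])
  then obtain R where "\<forall>y\<in>x ` {0..T}. norm y \<le> R" using compact_imp_bounded bounded_iff by metis
  then have R: "\<And>t. t \<in> {0..T} \<Longrightarrow> norm (x t) \<le> R" by blast
  have wb: "norm (trunc 0 T x t) \<le> max R 0" for t using R[of t] by (auto simp: trunc_def)
  have "(\<lambda>t. indicator {0..T} t *\<^sub>R x t) \<in> borel_measurable borel"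
    by (rule borel_measurable_continuous_on_indicator[OF _ cx]) simp
  moreover have "(\<lambda>t. indicator {0..} t *\<^sub>R trunc 0 T x t) = (\<lambda>t. indicator {0..T} t *\<^sub>R x t)"
    by (auto simp: trunc_def indicator_def fun_eq_iff)
  ultimately have "Linf (trunc 0 T x)" by (intro LinfI_bounded[OF _ wb]) simp
  then show ?thesis by (rule that[OF _ wb])
qed

lemma is_solution_on_sub_rhs:
  fixes f :: "real^'d \<Rightarrow> real^'m \<Rightarrow> real^'d" and b :: "'d \<Rightarrow> 'i"
  assumes x: "is_solution_on (\<lambda>s z. f z (v s)) x0 T x" and w: "\<And>s. s \<in> {0..T} \<Longrightarrow> w s = x s"
  shows "is_solution_on (sub_rhs b f i w v) (blk b i x0) T (\<lambda>t. blk b i (x t))"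
  unfolding is_solution_on_def
proof (intro conjI ballI)
  show "blk b i (x 0) = blk b i x0" using x by (simp add: is_solution_on_def)
  show "continuous_on {0..T} (\<lambda>t. blk b i (x t))"
    using x by (simp add: is_solution_on_def bounded_linear.continuous_on[OF bounded_linear_blk])
  fix t assume t: "t \<in> {0..T}"
  have "((\<lambda>s. f (x s) (v s)) has_integral (x t - x0)) {0..t}" using x t by (simp add: is_solution_on_def)
  from has_integral_linear[OF this bounded_linear_blk]
  have "((\<lambda>s. blk b i (f (x s) (v s))) has_integral (blk b i (x t) - blk b i x0)) {0..t}"
    by (simp add: o_def blk_diff)
  moreover have "blk b i (f (x s) (v s)) = sub_rhs b f i w v s (blk b i (x s))" if "s \<in> {0..t}" for s
    using that t w[of s] by (simp add: sub_rhs_def)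
  ultimately show "((\<lambda>s. sub_rhs b f i w v s (blk b i (x s))) has_integral (blk b i (x t) - blk b i x0)) {0..t}"
    by (subst has_integral_cong) auto
qed

lemma subsystem_estimate:
  fixes f :: "real^'d \<Rightarrow> real^'m \<Rightarrow> real^'d" and b :: "'d \<Rightarrow> 'i::finite"
  assumes GS: "subsystems_GS b f IS \<sigma> g gu"
    and v: "Linf v" "\<And>t. norm (v t) \<le> r"
    and x: "is_solution_on (\<lambda>s z. f z (v s)) x0 T x" and \<tau>: "\<tau> \<in> {0..T}"
  shows "norm (blk b i (x \<tau>)) \<le> mix IS i (mix IS i (\<sigma> i (norm (blk b i x0))) (gu i (linf_norm v)))
           (gain_fun IS g (\<lambda>j. linf_norm (trunc 0 \<tau> (\<lambda>s. blk b j (x s)))) i)"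
proof -
  have T0: "0 \<le> T" using \<tau> by simp
  \<comment> \<open>the other blocks of \<open>x\<close>, switched off after time \<open>T\<close>, serve as the input of the \<open>i\<close>-th subsystem\<close>
  define w where "w = trunc 0 T x"
  have "continuous_on {0..T} x" using x by (simp add: is_solution_on_def)
  then obtain R where Lw: "Linf w" and wb: "\<And>t. norm (w t) \<le> R"
    unfolding w_def by (elim Linf_trunc_continuous) blast
  define yi where "yi = (\<lambda>t. blk b i (x t))"
  have yi: "is_solution_on (sub_rhs b f i w v) (blk b i x0) T yi"
    unfolding yi_def by (rule is_solution_on_sub_rhs[OF x]) (simp add: w_def trunc_def)
  note GSi = GS[unfolded subsystems_GS_def, rule_format, of i]
  have "blk b i (yi T) = yi T" by (simp add: yi_def)
  then obtain y' where y': "is_solution (sub_rhs b f i (\<lambda>s. w (s + T)) (\<lambda>s. v (s + T))) (yi T) y'"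
    using GSi[OF _ Linf_shift[OF Lw wb T0] Linf_shift[OF v T0]] by blast
  have "(\<lambda>s. sub_rhs b f i w v (s + T)) = sub_rhs b f i (\<lambda>s. w (s + T)) (\<lambda>s. v (s + T))"
    by (simp add: sub_rhs_def fun_eq_iff)
  \<comment> \<open>the GS estimate concerns global solutions, so extend \<open>yi\<close> beyond \<open>T\<close>\<close>
  then have z: "is_solution (sub_rhs b f i w v) (blk b i x0) (\<lambda>t. if t \<le> T then yi t else y' (t - T))"
    using is_solution_append[OF yi T0] y' by simp
  have "(if s \<le> T then yi s else y' (s - T)) + (w s - blk b i (w s)) = x s" if "0 \<le> s" "s \<le> \<tau>" for s
    using that \<tau> by (simp add: yi_def w_def trunc_def blk_def vec_eq_iff)
  then have "trunc 0 \<tau> (\<lambda>s. blk b j ((if s \<le> T then yi s else y' (s - T)) + (w s - blk b i (w s))))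
      = trunc 0 \<tau> (\<lambda>s. blk b j (x s))" for j
    by (auto simp: trunc_def fun_eq_iff)
  moreover have "blk b i (blk b i x0) = blk b i x0" by simp
  note bound = conjunct2[OF GSi[OF this Lw v(1)], rule_format, OF z]
  ultimately show ?thesis using bound[of \<tau>] \<tau> by (simp add: yi_def)
qed

definition interconnection_gain :: "(real \<Rightarrow> real) \<Rightarrow> ('i::finite \<Rightarrow> 'i \<Rightarrow> real \<Rightarrow> real) \<Rightarrow> real \<Rightarrow> real" where
  "interconnection_gain \<alpha> g W = real CARD('i) * sg_bound \<alpha> g CARD('i) W"

lemma mono_gain_interconnection_gain:
  "class_Kinf \<alpha> \<Longrightarrow> (\<And>i j. mono_gain (g i j)) \<Longrightarrow> mono_gain (interconnection_gain \<alpha> g)"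
  unfolding interconnection_gain_def by (intro mono_gain_cmult mono_gain_sg_bound) auto

lemma mix_le_sum:
  fixes \<sigma> \<gamma> :: "'i::finite \<Rightarrow> real \<Rightarrow> real"
  assumes "\<And>k. mono_gain (\<sigma> k)" "\<And>k. mono_gain (\<gamma> k)"
    and "0 \<le> a" "a \<le> A" "0 \<le> c" "c \<le> C"
  shows "0 \<le> mix IS i (\<sigma> i a) (\<gamma> i c)"
    and "mix IS i (\<sigma> i a) (\<gamma> i c) \<le> (\<Sum>k\<in>UNIV. \<sigma> k A) + (\<Sum>k\<in>UNIV. \<gamma> k C)"
proof -
  have "\<sigma> i a \<le> (\<Sum>k\<in>UNIV. \<sigma> k A)" "\<gamma> i c \<le> (\<Sum>k\<in>UNIV. \<gamma> k C)"
    using mono_gain_mono[OF assms(1) assms(3,4), of i] mono_gain_mono[OF assms(2) assms(5,6), of i]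
      member_le_sum[of i UNIV "\<lambda>k. \<sigma> k A"] member_le_sum[of i UNIV "\<lambda>k. \<gamma> k C"]
      mono_gain_nonneg[OF assms(1)] mono_gain_nonneg[OF assms(2)] assms(3-6)
    by force+
  moreover have "0 \<le> \<sigma> i a" "0 \<le> \<gamma> i c"
    using mono_gain_nonneg[OF assms(1) assms(3)] mono_gain_nonneg[OF assms(2) assms(5)] by auto
  ultimately show "0 \<le> mix IS i (\<sigma> i a) (\<gamma> i c)"
    and "mix IS i (\<sigma> i a) (\<gamma> i c) \<le> (\<Sum>k\<in>UNIV. \<sigma> k A) + (\<Sum>k\<in>UNIV. \<gamma> k C)"
    by (auto simp: mix_def)
qed

lemma apriori_bound:
  fixes f :: "real^'d \<Rightarrow> real^'m \<Rightarrow> real^'d" and b :: "'d \<Rightarrow> 'i::finite"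
  assumes GS: "subsystems_GS b f IS \<sigma> g gu"
    and gains: "\<And>i. mono_gain (\<sigma> i)" "\<And>i j. mono_gain (g i j)" "\<And>i. mono_gain (gu i)"
    and \<alpha>: "class_Kinf \<alpha>" and sg: "small_gain_condition IS g \<alpha>"
    and v: "Linf v" "\<And>t. norm (v t) \<le> r"
    and x: "is_solution_on (\<lambda>s z. f z (v s)) x0 T x" and t: "t \<in> {0..T}"
  shows "norm (x t) \<le> interconnection_gain \<alpha> g ((\<Sum>k\<in>UNIV. \<sigma> k (norm x0)) + (\<Sum>k\<in>UNIV. gu k r))"
proof -
  define W where "W = (\<Sum>k\<in>UNIV. \<sigma> k (norm x0)) + (\<Sum>k\<in>UNIV. gu k r)"
  have r0: "0 \<le> r" using norm_ge_zero[of "v 0"] v(2)[of 0] by linarith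
  have lv: "linf_norm v \<le> r" "0 \<le> linf_norm v" using linf_norm_le[of v r] v(2) r0 by auto
  have cx: "continuous_on {0..t} x"
    using x t by (auto simp: is_solution_on_def intro: continuous_on_subset)
  have "\<exists>\<tau>\<in>{0..t}. \<forall>s\<in>{0..t}. norm (blk b j (x s)) \<le> norm (blk b j (x \<tau>))" for j
    by (rule continuous_attains_sup)
       (use t in \<open>auto intro!: continuous_on_norm bounded_linear.continuous_on[OF bounded_linear_blk cx]\<close>)
  then obtain tm where tm: "\<And>j. tm j \<in> {0..t}"
    "\<And>j s. s \<in> {0..t} \<Longrightarrow> norm (blk b j (x s)) \<le> norm (blk b j (x (tm j)))"
    by metis
  define S where "S = (\<lambda>j. norm (blk b j (x (tm j))))"
  have S0: "0 \<le> S j" for j by (simp add: S_def)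
  define w where "w = (\<lambda>i. mix IS i (\<sigma> i (norm (blk b i x0))) (gu i (linf_norm v)))"
  have "S i \<le> mix IS i (w i) (gain_fun IS g S i)" for i
  proof -
    have trunc_le: "linf_norm (trunc 0 (tm i) (\<lambda>s. blk b j (x s))) \<le> S j"
      "0 \<le> linf_norm (trunc 0 (tm i) (\<lambda>s. blk b j (x s)))" for j
    proof -
      have "norm (trunc 0 (tm i) (\<lambda>s. blk b j (x s)) s) \<le> S j" for s
        using tm(1)[of i] tm(2)[of s j] S0[of j] by (auto simp: trunc_def S_def)
      then show "linf_norm (trunc 0 (tm i) (\<lambda>s. blk b j (x s))) \<le> S j"
        "0 \<le> linf_norm (trunc 0 (tm i) (\<lambda>s. blk b j (x s)))"
        using linf_norm_le[OF _ S0] by blast+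
    qed
    have "S i \<le> mix IS i (w i) (gain_fun IS g (\<lambda>j. linf_norm (trunc 0 (tm i) (\<lambda>s. blk b j (x s)))) i)"
      unfolding S_def w_def
      by (rule subsystem_estimate[OF GS v x]) (use tm(1)[of i] t in auto)
    also have "\<dots> \<le> mix IS i (w i) (gain_fun IS g S i)"
      by (intro mix_mono order_refl gain_fun_mono[OF gains(2)] trunc_le)
    finally show ?thesis .
  qed
  moreover have "0 \<le> w i" "w i \<le> W" for i
    using mix_le_sum[where \<sigma> = \<sigma> and \<gamma> = gu, OF gains(1,3) norm_ge_zero norm_blk_le[of b i x0] lv(2,1), of IS i]
    unfolding w_def W_def by auto
  ultimately have Sb: "S i \<le> sg_bound \<alpha> g CARD('i) W" for i
    by (intro mixed_ineq_bound[OF \<alpha> sg gains(2) S0, where w = w]) auto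
  have "norm (x t) \<le> (\<Sum>i\<in>(UNIV::'i set). norm (blk b i (x t)))" by (rule norm_le_sum_blk)
  also have "\<dots> \<le> (\<Sum>i\<in>(UNIV::'i set). sg_bound \<alpha> g CARD('i) W)"
  proof (rule sum_mono)
    fix i :: 'i
    have "norm (blk b i (x t)) \<le> S i" using tm(2)[of t i] t by (simp add: S_def)
    then show "norm (blk b i (x t)) \<le> sg_bound \<alpha> g CARD('i) W" using Sb[of i] by linarith
  qed
  finally show ?thesis by (simp add: W_def interconnection_gain_def)
qed

lemma interconnection_bounded_input:
  fixes f :: "real^'d \<Rightarrow> real^'m \<Rightarrow> real^'d" and b :: "'d \<Rightarrow> 'i::finite" and x0 :: "real^'d"
  assumes f_cont: "continuous_on UNIV (\<lambda>(x, u). f x u)"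
    and lip: "\<And>R. \<exists>L. \<forall>u\<in>cball 0 r. L-lipschitz_on (cball 0 R) (\<lambda>x. f x u)"
    and GS: "subsystems_GS b f IS \<sigma> g gu"
    and gains: "\<And>i. mono_gain (\<sigma> i)" "\<And>i j. mono_gain (g i j)" "\<And>i. mono_gain (gu i)"
    and \<alpha>: "class_Kinf \<alpha>" and sg: "small_gain_condition IS g \<alpha>"
    and v: "Linf v" "\<And>t. norm (v t) \<le> r"
    and C: "interconnection_gain \<alpha> g ((\<Sum>k\<in>UNIV. \<sigma> k (norm x0)) + (\<Sum>k\<in>UNIV. gu k r)) \<le> C"
  defines "G \<equiv> \<lambda>s z. f z (v s)"
  shows "(\<exists>x. is_solution G x0 x)
    \<and> (\<forall>x x'. is_solution G x0 x \<longrightarrow> is_solution G x0 x' \<longrightarrow> (\<forall>t\<ge>0. x t = x' t))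
    \<and> (\<forall>x. is_solution G x0 x \<longrightarrow> (\<forall>t\<ge>0. norm (x t) \<le> C))"
proof -
  have bound: "norm (x t) \<le> C" if "is_solution_on G x0 T x" "t \<in> {0..T}" for T x t
    using apriori_bound[OF GS gains \<alpha> sg v that[unfolded G_def]] C by linarith
  show ?thesis
    unfolding G_def
  proof (intro conjI allI impI)
    show "\<exists>x. is_solution (\<lambda>s z. f z (v s)) x0 x"
      by (rule global_existence[OF f_cont lip v]) (rule bound[unfolded G_def])
    show "x t = x' t" if "is_solution (\<lambda>s z. f z (v s)) x0 x" "is_solution (\<lambda>s z. f z (v s)) x0 x'"
      "0 \<le> t" for x x' t
      using is_solution_on_unique_lipschitz[OF lip v(2) that(1,2)[THEN is_solution_imp_on[where T = t]]]
        that(3) by auto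
    show "norm (x t) \<le> C" if "is_solution (\<lambda>s z. f z (v s)) x0 x" "0 \<le> t" for x t
      using bound[OF that(1)[THEN is_solution_imp_on, folded G_def], of t t] that(2) by simp
  qed
qed

lemma Linf_bounded_representative:
  fixes u :: "real \<Rightarrow> 'b::euclidean_space" and F :: "'a::euclidean_space \<Rightarrow> 'b \<Rightarrow> 'a"
  assumes u: "Linf u"
  obtains v where "Linf v" "\<And>t. norm (v t) \<le> linf_norm u"
    "\<And>x0 x. is_solution (\<lambda>s z. F z (u s)) x0 x \<longleftrightarrow> is_solution (\<lambda>s z. F z (v s)) x0 x"
proof -
  define r where "r = linf_norm u"
  have uAE: "AE t in lborel. 0 \<le> t \<longrightarrow> norm (u t) \<le> r" and r0: "0 \<le> r"
    using Linf_AE_le[OF u] by (auto simp: r_def)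
  define v where "v = (\<lambda>s. if norm (u s) \<le> r then u s else 0)"
  have vb: "norm (v t) \<le> r" for t using r0 by (simp add: v_def)
  define U where "U = (\<lambda>t. indicator {0..} t *\<^sub>R u t)"
  have [measurable]: "U \<in> borel_measurable borel" using u by (simp add: U_def Linf_def)
  have "(\<lambda>t. if norm (U t) \<le> r then U t else 0) \<in> borel_measurable borel" by measurable
  moreover have "(\<lambda>t. indicator {0..} t *\<^sub>R v t) = (\<lambda>t. if norm (U t) \<le> r then U t else 0)"
    using r0 by (auto simp: U_def v_def indicator_def fun_eq_iff)
  ultimately have "Linf v" by (intro LinfI_bounded[OF _ vb]) simp
  obtain N where N: "{t \<in> space lborel. \<not> (0 \<le> t \<longrightarrow> norm (u t) \<le> r)} \<subseteq> N"
    "emeasure lborel N = 0" "N \<in> sets lborel"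
    using uAE by (rule AE_E)
  then have "N \<in> null_sets lebesgue" by (auto intro: null_sets_completionI)
  then have "negligible N" by (simp add: negligible_iff_null_sets)
  \<comment> \<open>the two integrands differ only on the null set \<open>N\<close>\<close>
  then have "((\<lambda>s. F (x s) (u s)) has_integral I) {0..t} \<longleftrightarrow> ((\<lambda>s. F (x s) (v s)) has_integral I) {0..t}"
    for x I t
    by (rule has_integral_spike_eq) (use N(1) in \<open>auto simp: v_def\<close>)
  then have "is_solution (\<lambda>s z. F z (u s)) x0 x \<longleftrightarrow> is_solution (\<lambda>s z. F z (v s)) x0 x"
    for x0 x
    unfolding is_solution_def by auto
  then show ?thesis using that \<open>Linf v\<close> vb by (auto simp: r_def)
qed

lemma interconnection_Linf_input:
  fixes f :: "real^'d \<Rightarrow> real^'m \<Rightarrow> real^'d" and b :: "'d \<Rightarrow> 'i::finite" and x0 :: "real^'d"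
  assumes f_cont: "continuous_on UNIV (\<lambda>(x, u). f x u)"
    and lip: "\<And>r R. \<exists>L. \<forall>u\<in>cball 0 r. L-lipschitz_on (cball 0 R) (\<lambda>x. f x u)"
    and GS: "subsystems_GS b f IS \<sigma> g gu"
    and gains: "\<And>i. mono_gain (\<sigma> i)" "\<And>i j. mono_gain (g i j)" "\<And>i. mono_gain (gu i)"
    and \<alpha>: "class_Kinf \<alpha>" and sg: "small_gain_condition IS g \<alpha>"
    and u: "Linf u"
    and C: "interconnection_gain \<alpha> g ((\<Sum>k\<in>UNIV. \<sigma> k (norm x0)) + (\<Sum>k\<in>UNIV. gu k (linf_norm u))) \<le> C"
  defines "G \<equiv> \<lambda>s z. f z (u s)"
  shows "(\<exists>x. is_solution G x0 x)
    \<and> (\<forall>x x'. is_solution G x0 x \<longrightarrow> is_solution G x0 x' \<longrightarrow> (\<forall>t\<ge>0. x t = x' t))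
    \<and> (\<forall>x. is_solution G x0 x \<longrightarrow> (\<forall>t\<ge>0. norm (x t) \<le> C))"
proof -
  obtain v where v: "Linf v" "\<And>t. norm (v t) \<le> linf_norm u"
    and uv: "\<And>y0 x. is_solution (\<lambda>s z. f z (u s)) y0 x \<longleftrightarrow> is_solution (\<lambda>s z. f z (v s)) y0 x"
    using Linf_bounded_representative[OF u, where F = f] by metis
  show ?thesis unfolding G_def uv
    by (rule interconnection_bounded_input[OF f_cont lip GS gains \<alpha> sg v C])
qed

theorem theorem1:
  fixes f :: "real^'d \<Rightarrow> real^'m \<Rightarrow> real^'d"
    and b :: "'d \<Rightarrow> 'i::finite" and ub :: "'m \<Rightarrow> 'i"
    and IS :: "'i set"
    and \<sigma> :: "'i \<Rightarrow> real \<Rightarrow> real" and g :: "'i \<Rightarrow> 'i \<Rightarrow> real \<Rightarrow> real"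
    and gu :: "'i \<Rightarrow> real \<Rightarrow> real"
  assumes blocks: "surj b" "surj ub"
    and f_cont: "continuous_on UNIV (\<lambda>(x, u). f x u)"
    and f_ui: "\<And>i x u u'. blk ub i u = blk ub i u' \<Longrightarrow> blk b i (f x u) = blk b i (f x u')"
    and f_lip: "\<And>i r x0. \<exists>\<delta>>0. \<exists>L. \<forall>x\<in>ball x0 \<delta>. \<forall>y\<in>ball x0 \<delta>. \<forall>u.
                  norm (blk ub i u) \<le> r \<longrightarrow>
                  norm (blk b i (f x u) - blk b i (f y u)) \<le> L * norm (x - y)"
    and gains: "\<And>i. class_K0 (\<sigma> i)" "\<And>i j. class_K0 (g i j)" "\<And>i. class_K0 (gu i)"
    and g_diag: "\<And>i s. 0 \<le> s \<Longrightarrow> g i i s = 0"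
    and sub_GS: "\<And>i xi w u. blk b i xi = xi \<Longrightarrow> Linf w \<Longrightarrow> Linf u \<Longrightarrow>
        (\<exists>y. is_solution (sub_rhs b f i w u) xi y)
      \<and> (\<forall>y y'. is_solution (sub_rhs b f i w u) xi y \<longrightarrow> is_solution (sub_rhs b f i w u) xi y'
              \<longrightarrow> (\<forall>t\<ge>0. y t = y' t))
      \<and> (\<forall>y. is_solution (sub_rhs b f i w u) xi y \<longrightarrow> (\<forall>t\<ge>0.
            norm (y t) \<le>
             (if i \<in> IS then
                \<sigma> i (norm xi)
                + (\<Sum>j\<in>UNIV. g i j (linf_norm (trunc 0 t
                      (\<lambda>s. blk b j (y s + (w s - blk b i (w s)))))))
                + gu i (linf_norm u)
              else
                max (\<sigma> i (norm xi))
                  (max (Max (range (\<lambda>j. g i j (linf_norm (trunc 0 t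
                      (\<lambda>s. blk b j (y s + (w s - blk b i (w s)))))))))
                    (gu i (linf_norm u))))))"
    and small_gain: "\<exists>\<alpha>. class_Kinf \<alpha> \<and>
        (\<forall>s::real^'i. (\<forall>i. 0 \<le> s $ i) \<and> s \<noteq> 0 \<longrightarrow>
           (\<exists>i. gain_op IS g (D_op IS \<alpha> s) $ i < s $ i))"
  shows "\<exists>\<sigma>0 g0. class_K \<sigma>0 \<and> class_K g0 \<and>
    (\<forall>x0 u. Linf u \<longrightarrow>
        (\<exists>x. is_solution (\<lambda>s z. f z (u s)) x0 x)
      \<and> (\<forall>x x'. is_solution (\<lambda>s z. f z (u s)) x0 x \<longrightarrow> is_solution (\<lambda>s z. f z (u s)) x0 x'
              \<longrightarrow> (\<forall>t\<ge>0. x t = x' t))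
      \<and> (\<forall>x. is_solution (\<lambda>s z. f z (u s)) x0 x \<longrightarrow>
              (\<forall>t\<ge>0. norm (x t) \<le> \<sigma>0 (norm x0) + g0 (linf_norm u))))"
proof -
  obtain \<alpha> where \<alpha>: "class_Kinf \<alpha>" and sg: "small_gain_condition IS g \<alpha>"
    using small_gain unfolding small_gain_condition_def by blast
  have GS: "subsystems_GS b f IS \<sigma> g gu"
    unfolding subsystems_GS_def mix_gain_fun_eq[symmetric]
    apply (intro allI impI)
    subgoal premises prems using sub_GS[OF prems] by (elim conjE) (intro conjI; assumption)
    done
  note gains' = gains[THEN class_K0_imp_mono_gain]
  have lip: "\<exists>L. \<forall>u\<in>cball 0 r. L-lipschitz_on (cball 0 R) (\<lambda>x. f x u)" for r R
    by (rule blockwise_lipschitz_on_cball[OF f_cont f_lip])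
  obtain \<sigma>0 g0 where K: "class_K \<sigma>0" "class_K g0" and gain_le:
    "\<And>a c. 0 \<le> a \<Longrightarrow> 0 \<le> c \<Longrightarrow> interconnection_gain \<alpha> g ((\<Sum>k\<in>UNIV. \<sigma> k a) + (\<Sum>k\<in>UNIV. gu k c))
       \<le> \<sigma>0 a + g0 c"
    using class_K_gain_split[where \<sigma> = \<sigma> and \<gamma> = gu,
        OF mono_gain_interconnection_gain[where g = g, OF \<alpha> gains'(2)] gains'(1,3)] by blast
  have main: "(\<exists>x. is_solution (\<lambda>s z. f z (u s)) x0 x)
      \<and> (\<forall>x x'. is_solution (\<lambda>s z. f z (u s)) x0 x \<longrightarrow> is_solution (\<lambda>s z. f z (u s)) x0 x'
              \<longrightarrow> (\<forall>t\<ge>0. x t = x' t))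
      \<and> (\<forall>x. is_solution (\<lambda>s z. f z (u s)) x0 x \<longrightarrow>
              (\<forall>t\<ge>0. norm (x t) \<le> \<sigma>0 (norm x0) + g0 (linf_norm u)))"
    if u: "Linf u" for x0 u
    by (rule interconnection_Linf_input[OF f_cont lip GS gains' \<alpha> sg u gain_le[OF norm_ge_zero Linf_AE_le(2)[OF u]]])
  show ?thesis
  proof (intro exI conjI)
    show "class_K \<sigma>0" "class_K g0" by (fact K)+
  qed (intro allI impI main)
qed

end
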